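(* Let $\mathcal G$ be a core network with multiple input nodes $\iota_1,\dots,\iota_n$ ($n\ge2$) and output node $o$, and let $\mathcal W_{\mathcal G}$ be its input counterweight subnetwork. Then $\langle H\rangle(\mathcal W_{\mathcal G})$ is, up to permutation of rows or columns, the irreducible input counterweight homeostasis block $C$ of $\langle H\rangle$.
   Context: Node $b$ is downstream from $a$ (and $a$ upstream from $b$) if there is a directed path from $a$ to $b$. Core network: every node upstream from $o$ and downstream from at least one input. Simple path: visits each node at most once; $\iota_mo$-simple path: simple path from $\iota_m$ to $o$. A node is $\iota_m$-simple if on some $\iota_mo$-simple path, $\iota_m$-appendage if downstream from $\iota_m$ but not $\iota_m$-simple; absolutely simple/appendage if $\iota_m$-simple/appendage for all $m$. Absolutely super-simple: lies on every $\iota_mo$-simple path for every $m$; ordered $\rho_1>\cdots>\rho_s>o$ ($b$ after $a$ on all such paths); $\rho_1$ is the greatest. A node is between adjacent absolutely super-simple nodes $\rho_k>\rho_{k+1}$ if it is absolutely simple and some $\iota_mo$-simple path visits $\rho_k$, it, $\rho_{k+1}$ in that order. For an $\iota_mo$-simple path $S$, $CS$ is the subnetwork of nodes of $\mathcal G$ not on $S$ with all arrows between them; $CS$-path equivalent = joined by directed paths inside $CS$ both ways. $\mathcal W_{\mathcal G}$ consists of: the input nodes; $\rho_1$; every node $\tau$ such that for some $m$ some $\iota_mo$-simple path visits $\iota_m,\tau,\rho_1$ in that order; all nodes neither absolutely appendage nor absolutely simple; all absolutely appendage nodes $CS_m$-path equivalent (for some $m$, some $\iota_mo$-simple $S_m$)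 to nodes that are not absolutely appendage and not between two absolutely super-simple nodes; with all arrows of $\mathcal G$ among them; its inputs are $\iota_1,\dots,\iota_n$ and output $\rho_1$. Admissible system: variables $x_j$ per node, $\dot x_{\iota_m}=f_{\iota_m}(X,\mathcal I)$, $\dot x_j=f_j(X)$ otherwise, $f_{j,x_\ell}\equiv0$ unless arrow $\ell\to j$ (all nodes self-coupled), $f_{\iota_m,\mathcal I}\neq0$; entries are independent indeterminates. For a network $\mathcal K$ with inputs $\iota_1,\dots,\iota_n$ and output $b$, $\langle H\rangle(\mathcal K)$ is $(f_{j,x_\ell})_{j,\ell\in\mathcal K}$ with the column of $b$ replaced by the column with $-f_{\iota_m,\mathcal I}$ in row $\iota_m$ and $0$ elsewhere; $\langle H\rangle=\langle H\rangle(\mathcal G)$. By Frobenius–König theory, for suitable permutation matrices $P,Q$, $P\langle H\rangle Q$ is block upper triangular with square fully indecomposable diagonal blocks (irreducible determinants); the unique diagonal block containing the entries $f_{\iota_m,\mathcal I}$, whose determinant is homogeneous of degree 1 in $f_{\iota_1,\mathcal I},\dots,f_{\iota_n,\mathcal I}$, is the input counterweight homeostasis block $C$. *)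

theory Defs
  imports Main
begin

text \<open>A network is given by a finite node set V, a set of arrows E (a pair (l,j) is an
arrow l -> j), a set of input nodes I (the nodes iota_1..iota_n) and an output node out.\<close>

definition downstream :: "('v \<times> 'v) set \<Rightarrow> 'v \<Rightarrow> 'v \<Rightarrow> bool" where
  "downstream E a b \<longleftrightarrow> (a, b) \<in> E\<^sup>*"

definition core_network :: "'v set \<Rightarrow> ('v \<times> 'v) set \<Rightarrow> 'v set \<Rightarrow> 'v \<Rightarrow> bool" where
  "core_network V E I out \<longleftrightarrow> finite V \<and> E \<subseteq> V \<times> V \<and> I \<subseteq> V \<and> out \<in> V \<and> out \<notin> I \<and>
     (\<forall>v\<in>V. downstream E v out \<and> (\<exists>i\<in>I. downstream E i v))"

definition simple_path :: "('v \<times> 'v) set \<Rightarrow> 'v \<Rightarrow> 'v \<Rightarrow> 'v list \<Rightarrow> bool" where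
  "simple_path E a b xs \<longleftrightarrow> xs \<noteq> [] \<and> hd xs = a \<and> last xs = b \<and> distinct xs \<and>
     successively (\<lambda>x y. (x, y) \<in> E) xs"

definition visits_before :: "'v list \<Rightarrow> 'v \<Rightarrow> 'v \<Rightarrow> bool" where
  "visits_before xs a b \<longleftrightarrow> (\<exists>p q. p < q \<and> q < length xs \<and> xs ! p = a \<and> xs ! q = b)"

definition i_simple :: "('v \<times> 'v) set \<Rightarrow> 'v \<Rightarrow> 'v \<Rightarrow> 'v \<Rightarrow> bool" where
  "i_simple E out i v \<longleftrightarrow> (\<exists>S. simple_path E i out S \<and> v \<in> set S)"

definition i_appendage :: "('v \<times> 'v) set \<Rightarrow> 'v \<Rightarrow> 'v \<Rightarrow> 'v \<Rightarrow> bool" where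
  "i_appendage E out i v \<longleftrightarrow> downstream E i v \<and> \<not> i_simple E out i v"

definition abs_simple :: "('v \<times> 'v) set \<Rightarrow> 'v set \<Rightarrow> 'v \<Rightarrow> 'v \<Rightarrow> bool" where
  "abs_simple E I out v \<longleftrightarrow> (\<forall>i\<in>I. i_simple E out i v)"

definition abs_appendage :: "('v \<times> 'v) set \<Rightarrow> 'v set \<Rightarrow> 'v \<Rightarrow> 'v \<Rightarrow> bool" where
  "abs_appendage E I out v \<longleftrightarrow> (\<forall>i\<in>I. i_appendage E out i v)"

definition abs_super_simple :: "'v set \<Rightarrow> ('v \<times> 'v) set \<Rightarrow> 'v set \<Rightarrow> 'v \<Rightarrow> 'v \<Rightarrow> bool" where
  "abs_super_simple V E I out v \<longleftrightarrow> v \<in> V \<and> (\<forall>i\<in>I. \<forall>S. simple_path E i out S \<longrightarrow> v \<in> set S)"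

definition ss_greater :: "('v \<times> 'v) set \<Rightarrow> 'v set \<Rightarrow> 'v \<Rightarrow> 'v \<Rightarrow> 'v \<Rightarrow> bool" where
  "ss_greater E I out a b \<longleftrightarrow> (\<forall>i\<in>I. \<forall>S. simple_path E i out S \<longrightarrow> visits_before S a b)"

definition rho1 :: "'v set \<Rightarrow> ('v \<times> 'v) set \<Rightarrow> 'v set \<Rightarrow> 'v \<Rightarrow> 'v" where
  "rho1 V E I out = (THE r. abs_super_simple V E I out r \<and>
      (\<forall>r'. abs_super_simple V E I out r' \<and> r' \<noteq> r \<longrightarrow> ss_greater E I out r r'))"

definition adjacent_ss :: "'v set \<Rightarrow> ('v \<times> 'v) set \<Rightarrow> 'v set \<Rightarrow> 'v \<Rightarrow> 'v \<Rightarrow> 'v \<Rightarrow> bool" where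
  "adjacent_ss V E I out a b \<longleftrightarrow> abs_super_simple V E I out a \<and> abs_super_simple V E I out b \<and>
     ss_greater E I out a b \<and>
     \<not> (\<exists>r. abs_super_simple V E I out r \<and> ss_greater E I out a r \<and> ss_greater E I out r b)"

definition between_ss :: "'v set \<Rightarrow> ('v \<times> 'v) set \<Rightarrow> 'v set \<Rightarrow> 'v \<Rightarrow> 'v \<Rightarrow> bool" where
  "between_ss V E I out v \<longleftrightarrow> (\<exists>a b. adjacent_ss V E I out a b \<and> abs_simple E I out v \<and>
     (\<exists>i\<in>I. \<exists>S. simple_path E i out S \<and> visits_before S a v \<and> visits_before S v b))"

definition cs_path_equiv :: "'v set \<Rightarrow> ('v \<times> 'v) set \<Rightarrow> 'v list \<Rightarrow> 'v \<Rightarrow> 'v \<Rightarrow> bool" where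
  "cs_path_equiv V E S u v \<longleftrightarrow>
     (let C = V - set S in u \<in> C \<and> v \<in> C \<and>
        (u, v) \<in> (E \<inter> (C \<times> C))\<^sup>* \<and> (v, u) \<in> (E \<inter> (C \<times> C))\<^sup>*)"

definition W_nodes :: "'v set \<Rightarrow> ('v \<times> 'v) set \<Rightarrow> 'v set \<Rightarrow> 'v \<Rightarrow> 'v set" where
  "W_nodes V E I out = {v \<in> V.
      v \<in> I
    \<or> v = rho1 V E I out
    \<or> (\<exists>i\<in>I. \<exists>S. simple_path E i out S \<and> visits_before S i v \<and> visits_before S v (rho1 V E I out))
    \<or> (\<not> abs_appendage E I out v \<and> \<not> abs_simple E I out v)
    \<or> (abs_appendage E I out v \<and>
         (\<exists>i\<in>I. \<exists>S. simple_path E i out S \<and>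
            (\<exists>u. \<not> abs_appendage E I out u \<and> \<not> between_ss V E I out u \<and> cs_path_equiv V E S v u)))}"

text \<open>Entries of the generalized homeostasis matrix are independent indeterminates;
  we represent them symbolically: Jac j l stands for f_{j,x_l}, Inp i for -f_{i,I};
  None stands for the entry 0.\<close>
datatype 'v entry = Jac 'v 'v | Inp 'v

type_synonym 'v gmat = "'v \<Rightarrow> 'v \<Rightarrow> 'v entry option"

text \<open><H>(K) for node set K, arrows E, inputs I and output b: rows and columns indexed by K
  (the column labelled b is the replaced input column). All nodes are self-coupled.\<close>
definition hmat :: "'v set \<Rightarrow> ('v \<times> 'v) set \<Rightarrow> 'v set \<Rightarrow> 'v \<Rightarrow> 'v gmat" where
  "hmat K E I b j l =
     (if j \<in> K \<and> l \<in> K then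
        (if l = b then (if j \<in> I then Some (Inp j) else None)
         else if l = j \<or> (l, j) \<in> E then Some (Jac j l) else None)
      else None)"

definition fully_indecomposable :: "'v gmat \<Rightarrow> 'v set \<Rightarrow> 'v set \<Rightarrow> bool" where
  "fully_indecomposable M R C \<longleftrightarrow> finite R \<and> finite C \<and> card R = card C \<and> card R \<ge> 1 \<and>
     (card R = 1 \<longrightarrow> (\<forall>r\<in>R. \<forall>c\<in>C. M r c \<noteq> None)) \<and>
     (\<forall>A B. A \<subseteq> R \<longrightarrow> B \<subseteq> C \<longrightarrow> A \<noteq> {} \<longrightarrow> B \<noteq> {} \<longrightarrow> card A + card B = card R \<longrightarrow>
        (\<exists>a\<in>A. \<exists>c\<in>B. M a c \<noteq> None))"

text \<open>A block upper triangular form P M Q with fully indecomposable square diagonal blocks: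
  the k-th diagonal block has rows fst (bs!k) and columns snd (bs!k).\<close>
definition btf_decomp :: "'v gmat \<Rightarrow> 'v set \<Rightarrow> 'v set \<Rightarrow> ('v set \<times> 'v set) list \<Rightarrow> bool" where
  "btf_decomp M Rows Cols bs \<longleftrightarrow>
     (\<forall>k < length bs. fully_indecomposable M (fst (bs ! k)) (snd (bs ! k))) \<and>
     (\<forall>k < length bs. \<forall>l < length bs. k \<noteq> l \<longrightarrow>
        fst (bs ! k) \<inter> fst (bs ! l) = {} \<and> snd (bs ! k) \<inter> snd (bs ! l) = {}) \<and>
     (\<Union>k < length bs. fst (bs ! k)) = Rows \<and>
     (\<Union>k < length bs. snd (bs ! k)) = Cols \<and>
     (\<forall>k < length bs. \<forall>l < k. \<forall>r \<in> fst (bs ! k). \<forall>c \<in> snd (bs ! l). M r c = None)"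

definition perm_equiv :: "'v gmat \<Rightarrow> 'v set \<Rightarrow> 'v set \<Rightarrow> 'v gmat \<Rightarrow> 'v set \<Rightarrow> 'v set \<Rightarrow> bool" where
  "perm_equiv M R C M' R' C' \<longleftrightarrow>
     (\<exists>\<sigma> \<tau>. bij_betw \<sigma> R R' \<and> bij_betw \<tau> C C' \<and> (\<forall>r\<in>R. \<forall>c\<in>C. M r c = M' (\<sigma> r) (\<tau> c)))"

end

theory Submission
  imports Defs "HOL-Combinatorics.Cycles"
begin

text \<open>Let \<open>Y\<close> consist of \<open>\<rho>\<^sub>1\<close> and the nodes reachable from an input other than \<open>\<rho>\<^sub>1\<close> by
  a path avoiding \<open>\<rho>\<^sub>1\<close>, and let \<open>Y'\<close> be \<open>Y\<close> with \<open>\<rho>\<^sub>1\<close> replaced by \<open>o\<close>, the label of the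
  input column. A simple path from an input to \<open>o\<close> yields a perfect matching of \<open>\<langle>H\<rangle>\<close>, so the
  diagonal blocks of every Frobenius--Koenig normal form are the strongly connected components of
  the associated matching graph. Rows outside \<open>Y\<close> vanish on the columns \<open>Y'\<close>, and \<open>Y \<times> Y'\<close> is
  fully indecomposable because \<open>\<rho>\<^sub>1\<close> precedes every other absolutely super-simple node. Hence the
  block containing the input column is \<open>Y \<times> Y'\<close>, which is \<open>\<langle>H\<rangle>(Y)\<close> after relabelling \<open>o\<close> as
  \<open>\<rho>\<^sub>1\<close>. Finally \<open>Y = \<W>\<^sub>\<G>\<close>: a node outside \<open>Y\<close> lies beyond \<open>\<rho>\<^sub>1\<close> and meets no clause of the
  definition, while an absolutely appendage node \<open>v\<close> of \<open>Y\<close> is reached, by an alternating-path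
  argument in \<open>Y \<times> Y'\<close>, from two inputs along disjoint paths ending at \<open>\<rho>\<^sub>1\<close> and at \<open>v\<close>.\<close>

section \<open>Simple paths and reachability\<close>

lemma simple_path_snoc:
  assumes "simple_path R a y xs" "(y, z) \<in> R" "z \<notin> set xs"
  shows "simple_path R a z (xs @ [z])"
  using assms unfolding simple_path_def by (auto simp: successively_append_iff)

lemma simple_path_prefix:
  assumes "simple_path R a b (ys @ x # zs)"
  shows "simple_path R a x (ys @ [x])"
proof -
  have "successively (\<lambda>x y. (x, y) \<in> R) ((ys @ [x]) @ zs)"
    using assms unfolding simple_path_def by simp
  then have "successively (\<lambda>x y. (x, y) \<in> R) (ys @ [x])"
    using successively_append_iff by blast
  then show ?thesis
    using assms unfolding simple_path_def by (cases ys) auto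
qed

lemma simple_path_suffix:
  assumes "simple_path R a b (ys @ x # zs)"
  shows "simple_path R x b (x # zs)"
  using assms unfolding simple_path_def by (auto simp: successively_append_iff)

lemma simple_path_append:
  assumes "simple_path R a b xs" "simple_path R b c ys" "set xs \<inter> set ys \<subseteq> {b}"
  shows "simple_path R a c (xs @ tl ys)"
proof -
  obtain ys' where ys: "ys = b # ys'"
    using assms(2) unfolding simple_path_def by (cases ys) auto
  have "last xs = b" "xs \<noteq> []"
    using assms(1) unfolding simple_path_def by auto
  then show ?thesis
    using assms unfolding simple_path_def ys
    by (cases ys') (auto simp: successively_append_iff)
qed

lemma rtrancl_imp_simple_path:
  assumes "(a, b) \<in> (Restr R X)\<^sup>*" "a \<in> X"
  obtains xs where "simple_path R a b xs" "set xs \<subseteq> X"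
proof -
  from assms(1) have "\<exists>xs. simple_path R a b xs \<and> set xs \<subseteq> X"
  proof (induction rule: rtrancl_induct)
    case base
    show ?case
      using assms(2) by (intro exI[of _ "[a]"]) (auto simp: simple_path_def)
  next
    case (step y z)
    then obtain xs where xs: "simple_path R a y xs" "set xs \<subseteq> X" by blast
    show ?case
    proof (cases "z \<in> set xs")
      case True
      then obtain ys zs where "xs = ys @ z # zs" by (meson split_list)
      then show ?thesis
        using simple_path_prefix xs by fastforce
    next
      case False
      then show ?thesis
        using simple_path_snoc[OF xs(1)] step(2) xs(2) by fastforce
    qed
  qed
  then show ?thesis using that by blast
qed

lemma successively_rtrancl_Restr:
  assumes "successively (\<lambda>x y. (x, y) \<in> R) xs" "xs \<noteq> []"
  shows "(hd xs, last xs) \<in> (Restr R (set xs))\<^sup>*"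
  using assms
proof (induction xs rule: induct_list012)
  case (3 x y zs)
  have "(y, last (y # zs)) \<in> (Restr R (set (y # zs)))\<^sup>*"
    using 3 by auto
  then have "(y, last (y # zs)) \<in> (Restr R (set (x # y # zs)))\<^sup>*"
    by (rule rtrancl_mono[THEN subsetD, rotated]) auto
  moreover have "(x, y) \<in> Restr R (set (x # y # zs))"
    using 3 by auto
  ultimately have "(x, last (y # zs)) \<in> (Restr R (set (x # y # zs)))\<^sup>*"
    by (meson converse_rtrancl_into_rtrancl)
  then show ?case by simp
qed auto

lemma simple_path_rtrancl:
  assumes "simple_path R a b xs"
  shows "(a, b) \<in> (Restr R (set xs))\<^sup>*"
  using successively_rtrancl_Restr[of R xs] assms unfolding simple_path_def by auto

lemma simple_path_split:
  assumes "simple_path R a b xs" "x \<in> set xs"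
  obtains ys zs where "xs = ys @ x # zs"
    "simple_path R a x (ys @ [x])" "simple_path R x b (x # zs)"
proof -
  obtain ys zs where xs: "xs = ys @ x # zs"
    using assms(2) by (meson split_list)
  show ?thesis
    using that[OF xs simple_path_prefix simple_path_suffix] assms(1) unfolding xs by blast
qed

lemma simple_path_mem_rtrancl:
  assumes "simple_path R a b xs" "x \<in> set xs"
  shows "(a, x) \<in> (Restr R (set xs))\<^sup>*" "(x, b) \<in> (Restr R (set xs))\<^sup>*"
proof -
  obtain ys zs where xs: "xs = ys @ x # zs"
    "simple_path R a x (ys @ [x])" "simple_path R x b (x # zs)"
    using simple_path_split[OF assms] .
  have "Restr R (set (ys @ [x])) \<subseteq> Restr R (set xs)" "Restr R (set (x # zs)) \<subseteq> Restr R (set xs)"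
    using xs(1) by auto
  then show "(a, x) \<in> (Restr R (set xs))\<^sup>*" "(x, b) \<in> (Restr R (set xs))\<^sup>*"
    using simple_path_rtrancl[OF xs(2)] simple_path_rtrancl[OF xs(3)] rtrancl_mono by blast+
qed

lemma simple_path_distinct: "simple_path R a b xs \<Longrightarrow> distinct xs"
  and simple_path_hd_in: "simple_path R a b xs \<Longrightarrow> a \<in> set xs"
  and simple_path_last_in: "simple_path R a b xs \<Longrightarrow> b \<in> set xs"
  unfolding simple_path_def by auto

lemma visits_before_nth_iff:
  assumes "distinct xs" "p < length xs" "q < length xs"
  shows "visits_before xs (xs ! p) (xs ! q) \<longleftrightarrow> p < q"
  using assms unfolding visits_before_def by (metis nth_eq_iff_index_eq order.strict_trans)

lemma visits_before_set: "visits_before xs a b \<Longrightarrow> a \<in> set xs \<and> b \<in> set xs"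
  unfolding visits_before_def by (metis nth_mem order.strict_trans)

lemma visits_before_cases:
  assumes "visits_before xs a b"
  obtains p q where "p < q" "q < length xs" "a = xs ! p" "b = xs ! q"
  using assms unfolding visits_before_def by blast

lemma visits_before_trans:
  assumes "distinct xs" "visits_before xs a b" "visits_before xs b c"
  shows "visits_before xs a c"
proof -
  obtain p q where pq: "p < q" "q < length xs" "a = xs ! p" "b = xs ! q"
    using assms(2) by (rule visits_before_cases)
  obtain q' r where qr: "q' < r" "r < length xs" "b = xs ! q'" "c = xs ! r"
    using assms(3) by (rule visits_before_cases)
  have "q = q'"
    using pq qr assms(1) nth_eq_iff_index_eq by (metis order.strict_trans)
  then show ?thesis
    unfolding visits_before_def using pq qr by (metis order.strict_trans)
qed

lemma visits_before_asym:
  assumes "distinct xs" "visits_before xs a b"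
  shows "\<not> visits_before xs b a"
  using visits_before_trans[OF assms] assms(1) visits_before_nth_iff
  by (metis order.irrefl visits_before_cases)

lemma visits_before_total:
  assumes "distinct xs" "a \<in> set xs" "b \<in> set xs" "a \<noteq> b"
  shows "visits_before xs a b \<or> visits_before xs b a"
  using assms unfolding visits_before_def in_set_conv_nth by (metis linorder_neqE_nat)

lemma visits_before_iff_split:
  assumes "distinct xs"
  shows "visits_before xs a b \<longleftrightarrow> (\<exists>ys zs. xs = ys @ a # zs \<and> b \<in> set zs)"
proof
  assume "visits_before xs a b"
  then obtain p q where pq: "p < q" "q < length xs" "a = xs ! p" "b = xs ! q"
    by (rule visits_before_cases)
  then have "xs = take p xs @ a # drop (Suc p) xs" "b \<in> set (drop (Suc p) xs)"
    by (auto simp: id_take_nth_drop in_set_conv_nth intro!: exI[of _ "q - Suc p"])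
  then show "\<exists>ys zs. xs = ys @ a # zs \<and> b \<in> set zs" by blast
next
  assume "\<exists>ys zs. xs = ys @ a # zs \<and> b \<in> set zs"
  then obtain ys zs k where "xs = ys @ a # zs" "k < length zs" "b = zs ! k"
    by (auto simp: in_set_conv_nth)
  then show "visits_before xs a b"
    unfolding visits_before_def
    by (intro exI[of _ "length ys"] exI[of _ "length ys + Suc k"]) (auto simp: nth_append)
qed

lemma visits_before_split:
  assumes "distinct xs" "visits_before xs a b"
  obtains ys us ws where "xs = ys @ a # us @ b # ws"
  using assms visits_before_iff_split by (metis split_list)

lemma visits_before_appendI:
  assumes "distinct (ys @ a # us @ b # ws)"
  shows "visits_before (ys @ a # us @ b # ws) a b"
  unfolding visits_before_iff_split[OF assms]
  by (intro exI[of _ ys] exI[of _ "us @ b # ws"]) simp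

lemma rtrancl_Restr_mono:
  "(a, b) \<in> (Restr R X)\<^sup>* \<Longrightarrow> X \<subseteq> Y \<Longrightarrow> (a, b) \<in> (Restr R Y)\<^sup>*"
  by (erule rtrancl_mono[THEN subsetD, rotated]) auto

lemma nearest_indices_around:
  fixes P :: "nat \<Rightarrow> bool"
  assumes "a0 < u" "u < b0" "P a0" "P b0"
  obtains a b where "a < u" "u < b" "b \<le> b0" "P a" "P b"
    "\<And>q. a < q \<Longrightarrow> q < b \<Longrightarrow> q \<noteq> u \<Longrightarrow> \<not> P q"
proof -
  define a where "a = Max {p. p < u \<and> P p}"
  define b where "b = Min {q. u < q \<and> q \<le> b0 \<and> P q}"
  have fa: "finite {p. p < u \<and> P p}" and fb: "finite {q. u < q \<and> q \<le> b0 \<and> P q}"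
    by auto
  have a: "a < u" "P a" and b: "u < b" "b \<le> b0" "P b"
    using Max_in[OF fa] Min_in[OF fb] assms unfolding a_def b_def by blast+
  have "\<not> P q" if "a < q" "q < b" "q \<noteq> u" for q
  proof
    assume "P q"
    show False
    proof (cases "q < u")
      case True
      then have "q \<le> a"
        unfolding a_def using Max_ge[OF fa] \<open>P q\<close> by blast
      then show False
        using that(1) by simp
    next
      case False
      then have "b \<le> q"
        unfolding b_def using Min_le[OF fb] \<open>P q\<close> that b(2) by force
      then show False
        using that(2) by simp
    qed
  qed
  then show ?thesis
    using that a b by blast
qed

text \<open>In a finite single-valued relation, the predecessor map on the ancestors of a sink \<open>c\<close>
  cannot be total: it would be injective, hence surjective, and give \<open>c\<close> a successor.\<close>

lemma single_valued_source:
  assumes sv: "single_valued F" and fin: "finite {a. (a, c) \<in> F\<^sup>*}" and sink: "\<And>b. (c, b) \<notin> F"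
  obtains s where "(s, c) \<in> F\<^sup>*" "\<And>a. (a, s) \<notin> F"
proof -
  have "\<exists>s. (s, c) \<in> F\<^sup>* \<and> (\<forall>a. (a, s) \<notin> F)"
  proof (rule ccontr)
    assume "\<nexists>s. (s, c) \<in> F\<^sup>* \<and> (\<forall>a. (a, s) \<notin> F)"
    then have pred: "\<exists>a. (a, s) \<in> F" if "(s, c) \<in> F\<^sup>*" for s
      using that by blast
    define A where "A = {a. (a, c) \<in> F\<^sup>*}"
    define q where "q s = (SOME a. (a, s) \<in> F)" for s
    have qF: "(q s, s) \<in> F" if "s \<in> A" for s
      using pred that someI_ex unfolding A_def q_def by fast
    have "q ` A \<subseteq> A"
      using qF unfolding A_def by (auto intro: converse_rtrancl_into_rtrancl)
    moreover have "inj_on q A"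
      using qF sv by (metis inj_onI single_valuedD)
    ultimately have "q ` A = A"
      using endo_inj_surj fin unfolding A_def by blast
    moreover have "c \<in> A"
      unfolding A_def by simp
    ultimately obtain s where "s \<in> A" "q s = c"
      by (metis imageE)
    then show False
      using qF sink by metis
  qed
  then show ?thesis
    using that by blast
qed

lemma single_valued_ancestors_disjoint:
  assumes sv: "single_valued F" and sinks: "\<And>b. (t, b) \<notin> F" "\<And>b. (t', b) \<notin> F" and "t \<noteq> t'"
  shows "{a. (a, t) \<in> F\<^sup>*} \<inter> {a. (a, t') \<in> F\<^sup>*} = {}"
proof -
  have False if "(a, t) \<in> F\<^sup>*" "(a, t') \<in> F\<^sup>*" for a
    using single_valued_confluent[OF sv that] sinks \<open>t \<noteq> t'\<close>
    by (metis converse_rtranclE)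
  then show ?thesis by blast
qed

lemma rtrancl_Restr_ancestors:
  assumes "F \<subseteq> Id \<union> R" "(a, t) \<in> F\<^sup>*"
  shows "(a, t) \<in> (Restr R {x. (x, t) \<in> F\<^sup>*})\<^sup>*"
  using assms(2)
proof (induction rule: converse_rtrancl_induct)
  case (step x y)
  then have "x = y \<or> (x, y) \<in> Restr R {x. (x, t) \<in> F\<^sup>*}"
    using assms(1) by (auto intro: converse_rtrancl_into_rtrancl)
  then show ?case
    using step(3) by (metis converse_rtrancl_into_rtrancl)
qed simp

lemma rtrancl_first_entry:
  assumes "(x, v) \<in> R\<^sup>*" "v \<in> K"
  obtains u where "u \<in> K" "x \<in> ({y. (y, v) \<in> R\<^sup>*} - K) \<union> {u}"
    "(x, u) \<in> (Restr R (({y. (y, v) \<in> R\<^sup>*} - K) \<union> {u}))\<^sup>*"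
proof -
  let ?A = "{y. (y, v) \<in> R\<^sup>*} - K"
  from assms(1) have "\<exists>u\<in>K. x \<in> ?A \<union> {u} \<and> (x, u) \<in> (Restr R (?A \<union> {u}))\<^sup>*"
  proof (induction rule: converse_rtrancl_induct)
    case base
    then show ?case using assms(2) by blast
  next
    case (step x y)
    then obtain u where u: "u \<in> K" "y \<in> ?A \<union> {u}" "(y, u) \<in> (Restr R (?A \<union> {u}))\<^sup>*"
      by blast
    show ?case
    proof (cases "x \<in> K")
      case False
      then have "x \<in> ?A"
        using step(1,2) by (blast intro: converse_rtrancl_into_rtrancl)
      then have "(x, y) \<in> Restr R (?A \<union> {u})"
        using step(1) u(2) by blast
      then show ?thesis
        using u \<open>x \<in> ?A\<close> by (blast intro: converse_rtrancl_into_rtrancl)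
    qed blast
  qed
  then show ?thesis
    using that by blast
qed

section \<open>Matchings and the block triangular form\<close>

definition perfect_matching :: "'v gmat \<Rightarrow> ('v \<Rightarrow> 'v) \<Rightarrow> 'v set \<Rightarrow> 'v set \<Rightarrow> bool" where
  "perfect_matching M \<mu> R C \<longleftrightarrow> bij_betw \<mu> R C \<and> (\<forall>r\<in>R. M r (\<mu> r) \<noteq> None)"

text \<open>The diagonal blocks of a block triangular form are the strongly connected components of
  this digraph.\<close>
definition matching_graph :: "'v gmat \<Rightarrow> ('v \<Rightarrow> 'v) \<Rightarrow> 'v set \<Rightarrow> ('v \<times> 'v) set" where
  "matching_graph M \<mu> R = {(r, r'). r \<in> R \<and> r' \<in> R \<and> M r (\<mu> r') \<noteq> None}"

definition scc_of :: "('a \<times> 'a) set \<Rightarrow> 'a \<Rightarrow> 'a set" where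
  "scc_of D r = {x. (r, x) \<in> D\<^sup>* \<and> (x, r) \<in> D\<^sup>*}"

lemma perfect_matching_subset:
  assumes "perfect_matching M \<mu> R C" "X \<subseteq> R"
  shows "perfect_matching M \<mu> X (\<mu> ` X)"
  using assms unfolding perfect_matching_def bij_betw_def by (auto intro: inj_on_subset)

lemma matching_graph_subset:
  "X \<subseteq> R \<Longrightarrow> matching_graph M \<mu> X = Restr (matching_graph M \<mu> R) X"
  unfolding matching_graph_def by auto

lemma matching_graph_subset_Times: "matching_graph M \<mu> R \<subseteq> R \<times> R"
  unfolding matching_graph_def by auto

lemma rtrancl_matching_graph_mono:
  "X \<subseteq> R \<Longrightarrow> (r, r') \<in> (matching_graph M \<mu> X)\<^sup>* \<Longrightarrow> (r, r') \<in> (matching_graph M \<mu> R)\<^sup>*"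
  unfolding matching_graph_subset by (erule rtrancl_mono[THEN subsetD, rotated]) auto

lemma scc_of_self [simp]: "r \<in> scc_of D r"
  unfolding scc_of_def by simp

lemma scc_of_eq: "x \<in> scc_of D r \<Longrightarrow> scc_of D x = scc_of D r"
  unfolding scc_of_def by (auto intro: rtrancl_trans)

lemma scc_of_disjoint:
  assumes "scc_of D a \<noteq> scc_of D b"
  shows "scc_of D a \<inter> scc_of D b = {}"
proof -
  have False if "x \<in> scc_of D a" "x \<in> scc_of D b" for x
    using that scc_of_eq assms by metis
  then show ?thesis by blast
qed

lemma scc_of_subset:
  assumes "D \<subseteq> R \<times> R" "r \<in> R"
  shows "scc_of D r \<subseteq> R"
proof
  fix x assume "x \<in> scc_of D r"
  then have "(x, r) \<in> D\<^sup>*" unfolding scc_of_def by simp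
  then show "x \<in> R" using assms by (cases rule: converse_rtranclE) auto
qed

lemma rtrancl_Restr_scc_of:
  assumes "x \<in> scc_of D r" "y \<in> scc_of D r"
  shows "(x, y) \<in> (Restr D (scc_of D r))\<^sup>*"
proof -
  have "(x, y) \<in> D\<^sup>*" "(y, x) \<in> D\<^sup>*" and eq: "scc_of D x = scc_of D r"
    using assms scc_of_eq unfolding scc_of_def by (blast intro: rtrancl_trans)+
  then have "(x, y) \<in> (Restr D (scc_of D x))\<^sup>*"
  proof (induction rule: rtrancl_induct)
    case (step y z)
    have "(z, x) \<in> D\<^sup>*" "(y, x) \<in> D\<^sup>*"
      using step by (auto intro: converse_rtrancl_into_rtrancl)
    then have "(y, z) \<in> Restr D (scc_of D x)"
      using step(1,2) unfolding scc_of_def by (auto intro: rtrancl_into_rtrancl)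
    then show ?case
      using step \<open>(y, x) \<in> D\<^sup>*\<close> by (meson rtrancl_into_rtrancl)
  qed simp
  then show ?thesis using eq by simp
qed

lemma card_ancestors_scc_of_less:
  assumes fin: "finite R" and D: "D \<subseteq> R \<times> R" and edge: "(r, r') \<in> D"
    and ne: "scc_of D r \<noteq> scc_of D r'"
  shows "card {x \<in> R. \<exists>y\<in>scc_of D r. (x, y) \<in> D\<^sup>*} < card {x \<in> R. \<exists>y\<in>scc_of D r'. (x, y) \<in> D\<^sup>*}"
proof (rule psubset_card_mono)
  have "(r', r) \<notin> D\<^sup>*"
    using ne edge scc_of_eq unfolding scc_of_def by (metis (no_types, lifting) mem_Collect_eq r_into_rtrancl)
  then have "\<not> (\<exists>y\<in>scc_of D r. (r', y) \<in> D\<^sup>*)"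
    unfolding scc_of_def using rtrancl_trans by fast
  moreover have "r' \<in> {x \<in> R. \<exists>y\<in>scc_of D r'. (x, y) \<in> D\<^sup>*}"
    using edge D by (auto intro!: bexI[of _ r'])
  moreover have "{x \<in> R. \<exists>y\<in>scc_of D r. (x, y) \<in> D\<^sup>*} \<subseteq> {x \<in> R. \<exists>y\<in>scc_of D r'. (x, y) \<in> D\<^sup>*}"
  proof (intro subsetI CollectI conjI)
    fix x assume "x \<in> {x \<in> R. \<exists>y\<in>scc_of D r. (x, y) \<in> D\<^sup>*}"
    then obtain y where "x \<in> R" "(x, y) \<in> D\<^sup>*" "(y, r) \<in> D\<^sup>*"
      unfolding scc_of_def by blast
    then have "(x, r') \<in> D\<^sup>*"
      using edge rtrancl_trans rtrancl_into_rtrancl by metis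
    then show "\<exists>y\<in>scc_of D r'. (x, y) \<in> D\<^sup>*"
      by (intro bexI[of _ r'] scc_of_self)
    show "x \<in> R" by fact
  qed
  ultimately show "{x \<in> R. \<exists>y\<in>scc_of D r. (x, y) \<in> D\<^sup>*} \<subset> {x \<in> R. \<exists>y\<in>scc_of D r'. (x, y) \<in> D\<^sup>*}"
    by blast
qed (use fin in simp)

lemma fully_indecomposable_imp_strongly_connected:
  assumes fi: "fully_indecomposable M R C" and pm: "perfect_matching M \<mu> R C"
    and r: "r \<in> R" and r': "r' \<in> R"
  shows "(r, r') \<in> (matching_graph M \<mu> R)\<^sup>*"
proof (rule ccontr)
  assume nr: "(r, r') \<notin> (matching_graph M \<mu> R)\<^sup>*"
  define A where "A = {x \<in> R. (r, x) \<in> (matching_graph M \<mu> R)\<^sup>*}"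
  define B where "B = C - \<mu> ` A"
  have finR: "finite R" and finC: "finite C" and cardRC: "card R = card C"
    using fi unfolding fully_indecomposable_def by auto
  have inj: "inj_on \<mu> R" and imgR: "\<mu> ` R = C"
    using pm unfolding perfect_matching_def bij_betw_def by auto
  have AR: "A \<subseteq> R" and rA: "r \<in> A" and r'A: "r' \<notin> A"
    using nr r unfolding A_def by auto
  then have "\<mu> r' \<in> B"
    unfolding B_def using r' imgR inj by (auto simp: inj_on_image_mem_iff)
  then have Bne: "B \<noteq> {}" by auto
  have cA: "card (\<mu> ` A) = card A"
    using card_image inj_on_subset[OF inj AR] by blast
  have sub: "\<mu> ` A \<subseteq> C"
    using AR imgR by auto
  have "card B = card C - card A" "card A \<le> card C"
    unfolding B_def using card_Diff_subset[OF finite_subset[OF sub finC] sub] card_mono[OF finC sub] cA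
    by simp_all
  then have "card A + card B = card R"
    using cardRC by simp
  moreover have "B \<subseteq> C" "A \<noteq> {}"
    unfolding B_def using rA by auto
  ultimately obtain a c where ac: "a \<in> A" "c \<in> B" "M a c \<noteq> None"
    using fi AR Bne unfolding fully_indecomposable_def by meson
  obtain x where x: "x \<in> R" "c = \<mu> x" "x \<notin> A"
    using ac(2) imgR unfolding B_def by blast
  have "(r, x) \<in> (matching_graph M \<mu> R)\<^sup>*"
    using ac x AR unfolding A_def matching_graph_def by (auto intro: rtrancl_into_rtrancl)
  then show False using x unfolding A_def by auto
qed

lemma strongly_connected_imp_fully_indecomposable:
  assumes finR: "finite R" and ne: "R \<noteq> {}" and pm: "perfect_matching M \<mu> R C"
    and sc: "\<And>r r'. r \<in> R \<Longrightarrow> r' \<in> R \<Longrightarrow> (r, r') \<in> (matching_graph M \<mu> R)\<^sup>*"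
  shows "fully_indecomposable M R C"
proof -
  have inj: "inj_on \<mu> R" and imgR: "\<mu> ` R = C" and diag: "\<And>r. r \<in> R \<Longrightarrow> M r (\<mu> r) \<noteq> None"
    using pm unfolding perfect_matching_def bij_betw_def by auto
  have finC: "finite C" and cardRC: "card R = card C"
    using imgR finR card_image[OF inj] by auto
  have one: "\<forall>r\<in>R. \<forall>c\<in>C. M r c \<noteq> None" if "card R = 1"
    using that imgR diag by (auto simp: card_1_singleton_iff)
  have "\<exists>a\<in>A. \<exists>c\<in>B. M a c \<noteq> None"
    if AR: "A \<subseteq> R" and BC: "B \<subseteq> C" and Ane: "A \<noteq> {}" and Bne: "B \<noteq> {}"
      and sum: "card A + card B = card R" for A B
  proof (rule ccontr)
    assume "\<not> (\<exists>a\<in>A. \<exists>c\<in>B. M a c \<noteq> None)"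
    then have zero: "\<And>a c. a \<in> A \<Longrightarrow> c \<in> B \<Longrightarrow> M a c = None" by blast
    have finB: "finite B" using BC finC finite_subset by blast
    have "\<mu> ` A \<subseteq> C - B"
      using zero diag AR imgR by fastforce
    moreover have "card (\<mu> ` A) = card (C - B)"
      using card_image[OF inj_on_subset[OF inj AR]] card_Diff_subset[OF finB BC] sum cardRC
      by simp
    ultimately have muA: "\<mu> ` A = C - B"
      using card_subset_eq finC by (metis finite_Diff)
    obtain a where a: "a \<in> A" using Ane by blast
    have "card B > 0" using finB Bne by (simp add: card_gt_0_iff)
    then have "card A < card R" using sum by linarith
    then obtain r' where r': "r' \<in> R" "r' \<notin> A" using AR by (metis less_irrefl subsetI subset_antisym)
    have "x \<in> A" if "(a, x) \<in> (matching_graph M \<mu> R)\<^sup>*" for x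
      using that
    proof (induction rule: rtrancl_induct)
      case (step y w)
      then have "w \<in> R" "\<mu> w \<notin> B"
        using zero unfolding matching_graph_def by auto
      then have "\<mu> w \<in> \<mu> ` A"
        using muA imgR by blast
      then show ?case
        using inj AR \<open>w \<in> R\<close> by (simp add: inj_on_image_mem_iff)
    qed (rule a)
    then show False using sc a AR r' by blast
  qed
  moreover have "card R \<ge> 1"
    using finR ne by (simp add: Suc_leI card_gt_0_iff)
  ultimately show ?thesis
    unfolding fully_indecomposable_def using finR finC cardRC one by blast
qed

context
  fixes M :: "'v gmat" and Rows Cols :: "'v set" and bs :: "('v set \<times> 'v set) list"
  assumes btf: "btf_decomp M Rows Cols bs"
begin

lemma btf_decomp_block_fi: "k < length bs \<Longrightarrow> fully_indecomposable M (fst (bs ! k)) (snd (bs ! k))"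
  and btf_decomp_rows: "(\<Union>k<length bs. fst (bs ! k)) = Rows"
  and btf_decomp_cols: "(\<Union>k<length bs. snd (bs ! k)) = Cols"
  and btf_decomp_rows_disjoint:
    "k < length bs \<Longrightarrow> l < length bs \<Longrightarrow> k \<noteq> l \<Longrightarrow> fst (bs ! k) \<inter> fst (bs ! l) = {}"
  and btf_decomp_cols_disjoint:
    "k < length bs \<Longrightarrow> l < length bs \<Longrightarrow> k \<noteq> l \<Longrightarrow> snd (bs ! k) \<inter> snd (bs ! l) = {}"
  and btf_decomp_zero_below:
    "k < length bs \<Longrightarrow> l < k \<Longrightarrow> r \<in> fst (bs ! k) \<Longrightarrow> c \<in> snd (bs ! l) \<Longrightarrow> M r c = None"
  using btf unfolding btf_decomp_def by blast+

lemma btf_decomp_block_index_unique: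
  "a < length bs \<Longrightarrow> b < length bs \<Longrightarrow> x \<in> fst (bs ! a) \<Longrightarrow> x \<in> fst (bs ! b) \<Longrightarrow> a = b"
  using btf_decomp_rows_disjoint by blast

text \<open>The rows of the blocks \<open>j, j + 1, \<dots>\<close> are matched into their columns, because the matched
  entries are nonzero and everything below the diagonal blocks vanishes; counting gives equality.\<close>

lemma btf_decomp_tail_matching:
  assumes pm: "perfect_matching M \<mu> Rows Cols"
  shows "\<mu> ` (\<Union>l\<in>{j..<length bs}. fst (bs ! l)) = (\<Union>l\<in>{j..<length bs}. snd (bs ! l))"
proof -
  let ?R = "\<Union>l\<in>{j..<length bs}. fst (bs ! l)" and ?C = "\<Union>l\<in>{j..<length bs}. snd (bs ! l)"
  have inj: "inj_on \<mu> Rows" and img: "\<mu> ` Rows = Cols" and diag: "\<And>r. r \<in> Rows \<Longrightarrow> M r (\<mu> r) \<noteq> None"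
    using pm unfolding perfect_matching_def bij_betw_def by auto
  have fin: "\<And>l. l < length bs \<Longrightarrow> finite (fst (bs ! l)) \<and> finite (snd (bs ! l))"
    and card: "\<And>l. l < length bs \<Longrightarrow> card (fst (bs ! l)) = card (snd (bs ! l))"
    using btf_decomp_block_fi unfolding fully_indecomposable_def by blast+
  have "\<mu> ` ?R \<subseteq> ?C"
  proof
    fix y assume "y \<in> \<mu> ` ?R"
    then obtain r l where rl: "y = \<mu> r" "r \<in> fst (bs ! l)" "j \<le> l" "l < length bs"
      by auto
    then have "r \<in> Rows"
      using btf_decomp_rows by blast
    then obtain l' where l': "l' < length bs" "y \<in> snd (bs ! l')"
      using rl(1) img btf_decomp_cols by blast
    have "\<not> l' < l"
      using btf_decomp_zero_below[OF rl(4) _ rl(2) l'(2)] diag[OF \<open>r \<in> Rows\<close>] rl(1) by auto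
    then show "y \<in> ?C"
      using l' rl by auto
  qed
  moreover have "card ?R = card ?C"
  proof -
    have "card ?R = (\<Sum>l\<in>{j..<length bs}. card (fst (bs ! l)))"
      using fin btf_decomp_rows_disjoint by (subst card_UN_disjoint) auto
    also have "\<dots> = (\<Sum>l\<in>{j..<length bs}. card (snd (bs ! l)))"
      using card by (intro sum.cong) auto
    also have "\<dots> = card ?C"
      using fin btf_decomp_cols_disjoint by (subst card_UN_disjoint) auto
    finally show ?thesis .
  qed
  moreover have "finite ?C" "?R \<subseteq> Rows"
    using fin btf_decomp_rows by auto
  ultimately show ?thesis
    using card_subset_eq card_image inj_on_subset[OF inj] by metis
qed

lemma btf_decomp_block_matching:
  assumes pm: "perfect_matching M \<mu> Rows Cols" and k: "k < length bs"
  shows "\<mu> ` fst (bs ! k) = snd (bs ! k)"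
proof -
  define RR where "RR j = (\<Union>l\<in>{j..<length bs}. fst (bs ! l))" for j
  define CC where "CC j = (\<Union>l\<in>{j..<length bs}. snd (bs ! l))" for j
  have "{k..<length bs} = insert k {Suc k..<length bs}"
    using k by auto
  then have "RR k = fst (bs ! k) \<union> RR (Suc k)" "CC k = snd (bs ! k) \<union> CC (Suc k)"
    unfolding RR_def CC_def by auto
  moreover have "fst (bs ! k) \<inter> RR (Suc k) = {}" "snd (bs ! k) \<inter> CC (Suc k) = {}"
    unfolding RR_def CC_def using btf_decomp_rows_disjoint[OF k] btf_decomp_cols_disjoint[OF k]
    by (fastforce dest!: Suc_le_lessD)+
  moreover have "RR k \<subseteq> Rows" "RR (Suc k) \<subseteq> Rows"
    unfolding RR_def using btf_decomp_rows by auto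
  then have "\<mu> ` (RR k - RR (Suc k)) = \<mu> ` RR k - \<mu> ` RR (Suc k)"
    using pm inj_on_image_set_diff unfolding perfect_matching_def bij_betw_def by blast
  ultimately show ?thesis
    using btf_decomp_tail_matching[OF pm] unfolding RR_def[symmetric] CC_def[symmetric]
    by (metis Diff_cancel Un_Diff Un_Diff_Int sup_bot.right_neutral Int_commute Diff_Int)
qed

lemma btf_decomp_block_index_mono:
  assumes pm: "perfect_matching M \<mu> Rows Cols" and path: "(r, r') \<in> (matching_graph M \<mu> Rows)\<^sup>*"
    and a: "a < length bs" "r \<in> fst (bs ! a)" and b: "b < length bs" "r' \<in> fst (bs ! b)"
  shows "a \<le> b"
proof -
  have "\<exists>c<length bs. a \<le> c \<and> x \<in> fst (bs ! c)" if "(r, x) \<in> (matching_graph M \<mu> Rows)\<^sup>*" for x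
    using that
  proof (induction rule: rtrancl_induct)
    case (step y w)
    obtain c where c: "c < length bs" "a \<le> c" "y \<in> fst (bs ! c)"
      using step(3) by blast
    have w: "w \<in> Rows" "M y (\<mu> w) \<noteq> None"
      using step(2) unfolding matching_graph_def by auto
    then obtain d where d: "d < length bs" "w \<in> fst (bs ! d)"
      using btf_decomp_rows by blast
    then have "\<mu> w \<in> snd (bs ! d)"
      using btf_decomp_block_matching[OF pm] by blast
    then have "\<not> d < c"
      using btf_decomp_zero_below[OF c(1) _ c(3)] w(2) by metis
    then show ?case using d c by auto
  qed (use a in auto)
  then show ?thesis
    using path b btf_decomp_block_index_unique by blast
qed

lemma btf_decomp_block_eq_scc_of:
  assumes pm: "perfect_matching M \<mu> Rows Cols" and k: "k < length bs" and r: "r \<in> fst (bs ! k)"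
  shows "fst (bs ! k) = scc_of (matching_graph M \<mu> Rows) r"
proof
  have fi: "fully_indecomposable M (fst (bs ! k)) (snd (bs ! k))"
    and sub: "fst (bs ! k) \<subseteq> Rows"
    using btf_decomp_block_fi btf_decomp_rows k by blast+
  have "perfect_matching M \<mu> (fst (bs ! k)) (snd (bs ! k))"
    using perfect_matching_subset[OF pm sub] btf_decomp_block_matching[OF pm k] by simp
  then show "fst (bs ! k) \<subseteq> scc_of (matching_graph M \<mu> Rows) r"
    using fully_indecomposable_imp_strongly_connected[OF fi] rtrancl_matching_graph_mono[OF sub] r
    unfolding scc_of_def by blast
next
  note rowsU = btf_decomp_rows
  show "scc_of (matching_graph M \<mu> Rows) r \<subseteq> fst (bs ! k)"
  proof
    fix x assume x: "x \<in> scc_of (matching_graph M \<mu> Rows) r"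
    moreover have "r \<in> Rows" using r k rowsU by blast
    ultimately have "x \<in> Rows"
      using scc_of_subset[OF matching_graph_subset_Times \<open>r \<in> Rows\<close>] by blast
    then obtain l where l: "l < length bs" "x \<in> fst (bs ! l)"
      using rowsU by blast
    have "k \<le> l" "l \<le> k"
      using btf_decomp_block_index_mono[OF pm] x l k r unfolding scc_of_def by blast+
    then show "x \<in> fst (bs ! k)" using l by simp
  qed
qed

end

lemma fully_indecomposable_scc_of:
  assumes fin: "finite R" and pm: "perfect_matching M \<mu> R C" and r: "r \<in> R"
  shows "fully_indecomposable M (scc_of (matching_graph M \<mu> R) r) (\<mu> ` scc_of (matching_graph M \<mu> R) r)"
proof -
  let ?X = "scc_of (matching_graph M \<mu> R) r"
  have sub: "?X \<subseteq> R"
    using scc_of_subset[OF matching_graph_subset_Times r] .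
  show ?thesis
  proof (rule strongly_connected_imp_fully_indecomposable)
    show "finite ?X"
      using finite_subset[OF sub fin] .
    show "?X \<noteq> {}"
      using scc_of_self[of r "matching_graph M \<mu> R"] by blast
    show "perfect_matching M \<mu> ?X (\<mu> ` ?X)"
      using perfect_matching_subset[OF pm sub] .
    show "(x, y) \<in> (matching_graph M \<mu> ?X)\<^sup>*" if "x \<in> ?X" "y \<in> ?X" for x y
      using rtrancl_Restr_scc_of[OF that] matching_graph_subset[OF sub] by simp
  qed
qed

text \<open>Existence: order the strongly connected components of the matching graph by their
  number of ancestors; every edge between different components then goes forward.\<close>

lemma btf_decomp_exists:
  assumes fin: "finite Rows" and pm: "perfect_matching M \<mu> Rows Cols"
  shows "\<exists>bs. btf_decomp M Rows Cols bs"
proof -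
  define D where "D = matching_graph M \<mu> Rows"
  define key where "key X = card {x \<in> Rows. \<exists>y\<in>X. (x, y) \<in> D\<^sup>*}" for X
  have inj: "inj_on \<mu> Rows" and imgR: "\<mu> ` Rows = Cols"
    using pm unfolding perfect_matching_def bij_betw_def by auto
  have sub: "r \<in> Rows \<Longrightarrow> scc_of D r \<subseteq> Rows" for r
    using scc_of_subset[OF matching_graph_subset_Times] unfolding D_def .
  have "finite (scc_of D ` Rows)"
    using fin by simp
  then obtain xs where "set xs = scc_of D ` Rows" "distinct xs"
    using finite_distinct_list by metis
  then obtain ys where ys: "set ys = scc_of D ` Rows" "distinct ys" "sorted (map key ys)"
    by (metis distinct_sort set_sort sorted_sort_key)
  define bs where "bs = map (\<lambda>X. (X, \<mu> ` X)) ys"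
  have block: "\<exists>r\<in>Rows. fst (bs ! k) = scc_of D r \<and> snd (bs ! k) = \<mu> ` scc_of D r"
    if "k < length bs" for k
    using that nth_mem[of k ys] ys(1) unfolding bs_def by auto
  have distinct_blocks: "fst (bs ! k) \<noteq> fst (bs ! l)"
    if "k < length bs" "l < length bs" "k \<noteq> l" for k l
    using that ys(2) unfolding bs_def by (simp add: nth_eq_iff_index_eq)
  have rows: "(\<Union>k < length bs. fst (bs ! k)) = Rows"
  proof -
    have "(\<Union>k < length bs. fst (bs ! k)) = \<Union> (set ys)"
      unfolding bs_def by (auto simp: in_set_conv_nth) (metis nth_mem)
    moreover have "\<Union> (scc_of D ` Rows) \<subseteq> Rows" "Rows \<subseteq> \<Union> (scc_of D ` Rows)"
      using sub by (blast, metis UN_iff scc_of_self subsetI)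
    ultimately show ?thesis
      using ys(1) by simp
  qed
  have upper: "M r c = None"
    if k: "k < length bs" and lk: "l < k" and r: "r \<in> fst (bs ! k)" and c: "c \<in> snd (bs ! l)"
    for k l r c
  proof (rule ccontr)
    assume nz: "M r c \<noteq> None"
    obtain a b where a: "a \<in> Rows" "fst (bs ! k) = scc_of D a"
      and b: "b \<in> Rows" "fst (bs ! l) = scc_of D b" "snd (bs ! l) = \<mu> ` scc_of D b"
      using block k lk by (meson order.strict_trans)
    obtain r' where r': "r' \<in> scc_of D b" "c = \<mu> r'"
      using c b(3) by blast
    have "r \<in> Rows" "r' \<in> Rows"
      using a b r r' sub by blast+
    then have edge: "(r, r') \<in> D"
      unfolding D_def matching_graph_def using nz r' by simp
    have Xr: "scc_of D r = fst (bs ! k)" and Yr': "scc_of D r' = fst (bs ! l)"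
      using scc_of_eq a(2) b(2) r r' by metis+
    have "scc_of D r \<noteq> scc_of D r'"
      using Xr Yr' distinct_blocks[OF k _ ] lk k by (metis order.strict_trans order.irrefl)
    then have "key (scc_of D r) < key (scc_of D r')"
      unfolding key_def D_def
      using card_ancestors_scc_of_less[OF fin matching_graph_subset_Times edge[unfolded D_def]] by simp
    moreover have "key (fst (bs ! l)) \<le> key (fst (bs ! k))"
      using sorted_nth_mono[OF ys(3), of l k] lk k unfolding bs_def by simp
    ultimately show False
      using Xr Yr' by simp
  qed
  have "btf_decomp M Rows Cols bs"
    unfolding btf_decomp_def
  proof (intro conjI allI impI)
    fix k assume "k < length bs"
    then show "fully_indecomposable M (fst (bs ! k)) (snd (bs ! k))"
      using block fully_indecomposable_scc_of[OF fin pm] unfolding D_def by force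
  next
    fix k l assume kl: "k < length bs" "l < length bs" "k \<noteq> l"
    then obtain a b where ab: "a \<in> Rows" "b \<in> Rows"
      "fst (bs ! k) = scc_of D a" "snd (bs ! k) = \<mu> ` scc_of D a"
      "fst (bs ! l) = scc_of D b" "snd (bs ! l) = \<mu> ` scc_of D b"
      using block by meson
    then show "fst (bs ! k) \<inter> fst (bs ! l) = {}"
      using scc_of_disjoint distinct_blocks[OF kl] by metis
    then show "snd (bs ! k) \<inter> snd (bs ! l) = {}"
      using ab inj_on_image_Int[OF inj sub[OF ab(1)] sub[OF ab(2)]] by simp
  next
    show "(\<Union>k < length bs. snd (bs ! k)) = Cols"
      using rows imgR unfolding bs_def by auto
  qed (use rows upper in auto)
  then show ?thesis ..
qed

lemma cycle_of_list_nth: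
  assumes "distinct cs" "j < length cs"
  shows "cycle_of_list cs (cs ! j) = cs ! (Suc j mod length cs)"
proof -
  have "map (cycle_of_list cs) cs = rotate1 cs"
    using cyclic_rotation[OF assms(1), of 1] by simp
  then show ?thesis
    using assms(2) nth_rotate1 by (metis nth_map)
qed

lemma cycle_of_list_rev_Suc:
  assumes "distinct S" "Suc j < length S"
  shows "cycle_of_list (rev S) (S ! Suc j) = S ! j"
proof -
  have "S ! Suc j = rev S ! (length S - Suc (Suc j))" "S ! j = rev S ! (length S - Suc j)"
    using assms(2) by (simp_all add: rev_nth)
  moreover have "Suc (length S - Suc (Suc j)) mod length S = length S - Suc j"
    using assms(2) by simp
  ultimately show ?thesis
    using cycle_of_list_nth[of "rev S" "length S - Suc (Suc j)"] assms by simp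
qed

lemma cycle_of_list_rev_0:
  assumes "distinct S" "S \<noteq> []"
  shows "cycle_of_list (rev S) (S ! 0) = last S"
  using cycle_of_list_nth[of "rev S" "length S - 1"] assms by (simp add: rev_nth last_conv_nth)

text \<open>The alternating-path step of matching theory: shifting a perfect matching along a path
  \<open>v \<rightarrow> \<dots> \<rightarrow> t\<close> of its matching graph frees the row \<open>t\<close> and the column matched to \<open>v\<close>.\<close>

lemma perfect_matching_shift_along_path:
  assumes pm: "perfect_matching M \<mu> R C" and v: "v \<in> R"
    and xs: "simple_path (matching_graph M \<mu> R) v t xs"
  shows "perfect_matching M (\<mu> \<circ> cycle_of_list xs) (R - {t}) (C - {\<mu> v})"
proof -
  let ?\<sigma> = "cycle_of_list xs"
  have d: "distinct xs" and ne: "xs \<noteq> []" and hd: "xs ! 0 = v" and last: "xs ! (length xs - 1) = t"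
    using xs unfolding simple_path_def by (auto simp: hd_conv_nth last_conv_nth)
  have "set xs \<subseteq> R"
  proof
    fix x assume "x \<in> set xs"
    then have "(v, x) \<in> (matching_graph M \<mu> R)\<^sup>*"
      using simple_path_mem_rtrancl(1)[OF xs] rtrancl_mono[of _ "matching_graph M \<mu> R"] by blast
    then show "x \<in> R"
      using v matching_graph_subset_Times[of M \<mu> R] by (cases rule: rtranclE) auto
  qed
  then have perm: "?\<sigma> permutes R"
    using cycle_permutes permutes_subset by blast
  have "?\<sigma> t = v"
    using cycle_of_list_nth[OF d, of "length xs - 1"] ne hd last by simp
  then have "bij_betw ?\<sigma> (R - {t}) (R - {v})"
    using bij_betw_DiffI[OF permutes_imp_bij[OF perm], of "{t}" "{v}"] v
      simple_path_last_in[OF xs] \<open>set xs \<subseteq> R\<close> by auto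
  moreover have "bij_betw \<mu> (R - {v}) (C - {\<mu> v})"
    using bij_betw_DiffI[of \<mu> R C "{v}" "{\<mu> v}"] pm v unfolding perfect_matching_def bij_betw_def
    by auto
  moreover have "M x (\<mu> (?\<sigma> x)) \<noteq> None" if x: "x \<in> R - {t}" for x
  proof (cases "x \<in> set xs")
    case False
    then show ?thesis
      using id_outside_supp[OF False] pm x unfolding perfect_matching_def by simp
  next
    case True
    then obtain j where j: "j < length xs" "x = xs ! j"
      by (metis in_set_conv_nth)
    then have sj: "Suc j < length xs"
      using x last by (metis Suc_lessI diff_Suc_1 DiffD2 singletonI)
    then have "?\<sigma> x = xs ! Suc j"
      using cycle_of_list_nth[OF d] j by simp
    moreover have "(xs ! j, xs ! Suc j) \<in> matching_graph M \<mu> R"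
      using successively_nth[OF _ sj] xs unfolding simple_path_def by blast
    ultimately show ?thesis
      using j unfolding matching_graph_def by simp
  qed
  ultimately show ?thesis
    unfolding perfect_matching_def using bij_betw_trans by (metis comp_apply)
qed

lemma hmat_nonzero_iff:
  "j \<in> K \<Longrightarrow> l \<in> K \<Longrightarrow> hmat K E I b j l \<noteq> None \<longleftrightarrow> (if l = b then j \<in> I else l = j \<or> (l, j) \<in> E)"
  unfolding hmat_def by simp

lemma perm_equiv_hmat_relabel_output:
  assumes "insert b (insert b' K) \<subseteq> V" "b \<notin> K" "b' \<notin> K"
  shows "perm_equiv (hmat V E I b) (insert b' K) (insert b K) (hmat (insert b' K) E I b')
           (insert b' K) (insert b' K)"
proof -
  define \<tau> where "\<tau> c = (if c = b then b' else c)" for c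
  have "bij_betw \<tau> (insert b K) (insert b' K)"
    unfolding bij_betw_def inj_on_def \<tau>_def using assms(2,3) by auto
  moreover have "hmat V E I b r c = hmat (insert b' K) E I b' (id r) (\<tau> c)"
    if "r \<in> insert b' K" "c \<in> insert b K" for r c
    using that assms unfolding hmat_def \<tau>_def by auto
  ultimately show ?thesis
    unfolding perm_equiv_def by (metis bij_betw_id)
qed

section \<open>Absolutely super-simple nodes\<close>

locale multi_input_core_network =
  fixes V :: "'v set" and E :: "('v \<times> 'v) set" and I :: "'v set" and out :: 'v
  assumes core: "core_network V E I out" and two_inputs: "card I \<ge> 2"
begin

abbreviation "super_simple \<equiv> abs_super_simple V E I out"
abbreviation "rho \<equiv> rho1 V E I out"

lemma finite_V: "finite V" and E_subset: "E \<subseteq> V \<times> V" and I_subset: "I \<subseteq> V"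
  and out_in_V: "out \<in> V"
  and reaches_out: "\<And>v. v \<in> V \<Longrightarrow> (v, out) \<in> E\<^sup>*"
  and reached_from_input: "\<And>v. v \<in> V \<Longrightarrow> \<exists>i\<in>I. (i, v) \<in> E\<^sup>*"
  using core unfolding core_network_def downstream_def by auto

lemma Restr_E_V: "Restr E V = E"
  using E_subset by auto

lemma rtrancl_E_in_V: "(a, x) \<in> E\<^sup>* \<Longrightarrow> a \<in> V \<Longrightarrow> x \<in> V"
  by (induction rule: rtrancl_induct) (use E_subset in auto)

lemma simple_path_in_V:
  assumes "simple_path E a b S" "a \<in> V"
  shows "set S \<subseteq> V"
proof
  fix x assume "x \<in> set S"
  then have "(a, x) \<in> E\<^sup>*"
    using simple_path_mem_rtrancl(1)[OF assms(1)] rtrancl_mono[of "Restr E (set S)" E] by blast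
  then show "x \<in> V" using rtrancl_E_in_V assms(2) by blast
qed

lemma simple_path_rtrancl_avoiding:
  assumes "simple_path E a b S" "a \<in> V" "v \<notin> set S"
  shows "(a, b) \<in> (Restr E (V - {v}))\<^sup>*"
proof -
  have "set S \<subseteq> V - {v}"
    using simple_path_in_V[OF assms(1,2)] assms(3) by blast
  then show ?thesis
    using rtrancl_Restr_mono[OF simple_path_rtrancl[OF assms(1)]] by blast
qed

lemma input_simple_path:
  assumes "i \<in> I"
  obtains S where "simple_path E i out S"
proof -
  have "(i, out) \<in> (Restr E V)\<^sup>*" "i \<in> V"
    using reaches_out assms I_subset Restr_E_V by auto
  then show ?thesis
    using rtrancl_imp_simple_path that by metis
qed

lemma two_distinct_inputs:
  obtains i1 i2 where "i1 \<in> I" "i2 \<in> I" "i1 \<noteq> i2"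
proof -
  have "finite I" using finite_V I_subset finite_subset by blast
  then have "\<not> (\<forall>a\<in>I. \<forall>b\<in>I. a = b)"
    using two_inputs card_le_Suc0_iff_eq by fastforce
  then show ?thesis using that by blast
qed

lemma simple_path_avoiding_imp_not_super_simple:
  "i \<in> I \<Longrightarrow> simple_path E i out S \<Longrightarrow> v \<notin> set S \<Longrightarrow> \<not> super_simple v"
  unfolding abs_super_simple_def by blast

lemma super_simple_iff:
  "super_simple v \<longleftrightarrow> v \<in> V \<and> (\<forall>i\<in>I. i \<noteq> v \<longrightarrow> (i, out) \<notin> (Restr E (V - {v}))\<^sup>*)"
proof
  assume ss: "super_simple v"
  show "v \<in> V \<and> (\<forall>i\<in>I. i \<noteq> v \<longrightarrow> (i, out) \<notin> (Restr E (V - {v}))\<^sup>*)"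
  proof (intro conjI ballI impI notI)
    show "v \<in> V" using ss unfolding abs_super_simple_def by simp
  next
    fix i assume i: "i \<in> I" "i \<noteq> v" "(i, out) \<in> (Restr E (V - {v}))\<^sup>*"
    moreover have "i \<in> V - {v}"
      using i I_subset by auto
    ultimately obtain S where "simple_path E i out S" "set S \<subseteq> V - {v}"
      using rtrancl_imp_simple_path by metis
    then show False
      using ss i simple_path_avoiding_imp_not_super_simple by blast
  qed
next
  assume H: "v \<in> V \<and> (\<forall>i\<in>I. i \<noteq> v \<longrightarrow> (i, out) \<notin> (Restr E (V - {v}))\<^sup>*)"
  have "v \<in> set S" if i: "i \<in> I" and S: "simple_path E i out S" for i S
  proof (rule ccontr)
    assume nv: "v \<notin> set S"
    then have "i \<noteq> v"
      using simple_path_hd_in[OF S] by blast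
    then show False
      using H i simple_path_rtrancl_avoiding[OF S _ nv] I_subset by blast
  qed
  then show "super_simple v"
    unfolding abs_super_simple_def using H by blast
qed

lemma super_simple_in_path: "super_simple v \<Longrightarrow> i \<in> I \<Longrightarrow> simple_path E i out S \<Longrightarrow> v \<in> set S"
  unfolding abs_super_simple_def by blast

lemma super_simple_out: "super_simple out"
  unfolding abs_super_simple_def using out_in_V simple_path_last_in by metis

text \<open>Two absolutely super-simple nodes occur in the same order on all input-output simple paths:
  otherwise splicing two such paths would avoid one of them.\<close>

lemma super_simple_order_consistent:
  assumes a: "super_simple a" and b: "super_simple b"
    and S: "i \<in> I" "simple_path E i out S" and S': "i' \<in> I" "simple_path E i' out S'"
    and ab: "visits_before S a b"
  shows "visits_before S' a b"
proof (rule ccontr)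
  assume nab: "\<not> visits_before S' a b"
  have dS: "distinct S" "distinct S'"
    using simple_path_distinct S(2) S'(2) by metis+
  have neq: "a \<noteq> b"
    using visits_before_asym[OF dS(1) ab] ab by blast
  have "visits_before S' b a"
    using visits_before_total[OF dS(2)] super_simple_in_path a b S' neq nab by blast
  then obtain ys' us' ws' where sp': "S' = ys' @ b # us' @ a # ws'"
    using visits_before_split[OF dS(2)] by metis
  obtain ys us ws where sp: "S = ys @ a # us @ b # ws"
    using visits_before_split[OF dS(1) ab] .
  have p1: "simple_path E i' b (ys' @ [b])"
    using simple_path_prefix S'(2) sp' by fastforce
  have p2: "simple_path E b out (b # ws)"
    using simple_path_suffix[of E i out "ys @ a # us" b ws] S(2) sp by simp
  have "a \<notin> set (ys' @ [b])" "a \<notin> set (b # ws)"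
    using dS sp sp' neq by auto
  moreover have "i' \<in> V" "b \<in> V"
    using S'(1) I_subset b unfolding abs_super_simple_def by auto
  ultimately have "(i', b) \<in> (Restr E (V - {a}))\<^sup>*" "(b, out) \<in> (Restr E (V - {a}))\<^sup>*"
    using simple_path_rtrancl_avoiding p1 p2 by blast+
  moreover have "i' \<noteq> a"
    using \<open>a \<notin> set (ys' @ [b])\<close> simple_path_hd_in[OF p1] by blast
  ultimately show False
    using a S'(1) super_simple_iff by (meson rtrancl_trans)
qed

text \<open>The description in \<^const>\<open>rho1\<close> is proper: the first absolutely super-simple node on any
  input-output simple path precedes all the others on every such path.\<close>

lemma rho_greatest:
  "super_simple rho \<and> (\<forall>r. super_simple r \<and> r \<noteq> rho \<longrightarrow> ss_greater E I out rho r)"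
proof -
  obtain i0 S0 where S0: "i0 \<in> I" "simple_path E i0 out S0"
    using input_simple_path two_distinct_inputs by metis
  define p0 where "p0 = (LEAST p. p < length S0 \<and> super_simple (S0 ! p))"
  define r0 where "r0 = S0 ! p0"
  have "\<exists>p. p < length S0 \<and> super_simple (S0 ! p)"
    using super_simple_out simple_path_last_in[OF S0(2)] by (metis in_set_conv_nth)
  then have p0: "p0 < length S0" "super_simple r0"
    unfolding p0_def r0_def by (metis (mono_tags, lifting) LeastI_ex)+
  define Q where "Q r = (super_simple r \<and> (\<forall>r'. super_simple r' \<and> r' \<noteq> r \<longrightarrow> ss_greater E I out r r'))" for r
  have "Q r0"
    unfolding Q_def
  proof (intro conjI allI impI)
    fix r' assume r': "super_simple r' \<and> r' \<noteq> r0"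
    then obtain q where q: "q < length S0" "S0 ! q = r'"
      using super_simple_in_path S0 by (metis in_set_conv_nth)
    then have "p0 \<le> q"
      unfolding p0_def by (intro Least_le) (use r' in simp)
    moreover have "p0 \<noteq> q"
      using q r' unfolding r0_def by blast
    ultimately have "visits_before S0 r0 r'"
      unfolding visits_before_def r0_def using q by (metis le_neq_implies_less)
    then show "ss_greater E I out r0 r'"
      unfolding ss_greater_def using super_simple_order_consistent[OF p0(2) _ S0] r' by blast
  qed (use p0 in simp)
  moreover have "r = r0" if "Q r" for r
  proof (rule ccontr)
    assume "r \<noteq> r0"
    then have "visits_before S0 r0 r" "visits_before S0 r r0"
      using \<open>Q r0\<close> that S0 unfolding Q_def ss_greater_def by metis+
    then show False
      using visits_before_asym[OF simple_path_distinct[OF S0(2)]] by blast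
  qed
  ultimately have "rho = r0"
    unfolding rho1_def Q_def by (rule the_equality)
  then show ?thesis using \<open>Q r0\<close> unfolding Q_def by simp
qed

lemma super_simple_rho: "super_simple rho"
  using rho_greatest by blast

lemma rho_in_V: "rho \<in> V"
  using super_simple_rho unfolding abs_super_simple_def by simp

lemma rho_in_path: "i \<in> I \<Longrightarrow> simple_path E i out S \<Longrightarrow> rho \<in> set S"
  using super_simple_in_path[OF super_simple_rho] by blast

lemma rho_first:
  "super_simple r \<Longrightarrow> r \<noteq> rho \<Longrightarrow> i \<in> I \<Longrightarrow> simple_path E i out S \<Longrightarrow> visits_before S rho r"
  using rho_greatest unfolding ss_greater_def by blast

definition pre_rho :: "'v set" where
  "pre_rho = {v \<in> V. v \<noteq> rho \<and> (\<exists>i\<in>I. i \<noteq> rho \<and> (i, v) \<in> (Restr E (V - {rho}))\<^sup>*)}"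

lemma pre_rho_subset_V: "pre_rho \<subseteq> V"
  unfolding pre_rho_def by auto

lemma rho_notin_pre_rho: "rho \<notin> pre_rho"
  unfolding pre_rho_def by auto

lemma finite_pre_rho: "finite pre_rho"
  using pre_rho_subset_V finite_V finite_subset by blast

lemma pre_rho_closed:
  assumes "x \<in> pre_rho" "(x, y) \<in> (Restr E (V - {rho}))\<^sup>*"
  shows "y \<in> pre_rho"
proof -
  obtain i where i: "i \<in> I" "i \<noteq> rho" "(i, x) \<in> (Restr E (V - {rho}))\<^sup>*"
    using assms(1) unfolding pre_rho_def by blast
  have "y \<in> V - {rho}"
    using assms(2) by (induction rule: rtrancl_induct) (use assms(1) in \<open>auto simp: pre_rho_def\<close>)
  then show ?thesis
    unfolding pre_rho_def using i rtrancl_trans[OF i(3) assms(2)] by blast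
qed

lemma input_in_pre_rho: "i \<in> I \<Longrightarrow> i \<noteq> rho \<Longrightarrow> i \<in> pre_rho"
  unfolding pre_rho_def using I_subset by blast

lemma inputs_subset: "I \<subseteq> insert rho pre_rho"
  using input_in_pre_rho by blast

lemma pre_rho_nonempty: "pre_rho \<noteq> {}"
proof -
  obtain i1 i2 where "i1 \<in> I" "i2 \<in> I" "i1 \<noteq> i2"
    using two_distinct_inputs .
  then have "i1 \<in> pre_rho \<or> i2 \<in> pre_rho"
    using input_in_pre_rho by metis
  then show ?thesis by blast
qed

lemma pre_rho_not_reaches_out:
  assumes "x \<in> pre_rho"
  shows "(x, out) \<notin> (Restr E (V - {rho}))\<^sup>*"
proof
  assume "(x, out) \<in> (Restr E (V - {rho}))\<^sup>*"
  moreover obtain i where "i \<in> I" "i \<noteq> rho" "(i, x) \<in> (Restr E (V - {rho}))\<^sup>*"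
    using assms unfolding pre_rho_def by blast
  ultimately show False
    using super_simple_rho super_simple_iff by (meson rtrancl_trans)
qed

lemma out_notin_pre_rho: "out \<notin> pre_rho"
  using pre_rho_not_reaches_out by blast

lemma pre_rho_from_input:
  assumes "x \<in> pre_rho"
  obtains i where "i \<in> I" "i \<noteq> rho" "(i, x) \<in> (Restr E pre_rho)\<^sup>*"
proof -
  obtain i where i: "i \<in> I" "i \<noteq> rho" "(i, x) \<in> (Restr E (V - {rho}))\<^sup>*"
    using assms unfolding pre_rho_def by blast
  have "(i, y) \<in> (Restr E pre_rho)\<^sup>*" if "(i, y) \<in> (Restr E (V - {rho}))\<^sup>*" for y
    using that
  proof (induction rule: rtrancl_induct)
    case (step y z)
    have "y \<in> pre_rho" "z \<in> pre_rho"
      using pre_rho_closed input_in_pre_rho[OF i(1,2)] step(1,2) by (meson rtrancl.rtrancl_into_rtrancl)+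
    then have "(y, z) \<in> Restr E pre_rho"
      using step(2) by blast
    then show ?case
      using step(3) by (rule rtrancl_into_rtrancl[rotated])
  qed simp
  then show ?thesis
    using that i by blast
qed

lemma in_pre_rho_if_before_rho:
  assumes S: "i \<in> I" "simple_path E i out S" and vb: "visits_before S v rho"
  shows "v \<in> pre_rho"
proof -
  have ds: "distinct S"
    using simple_path_distinct S(2) by metis
  obtain ys us ws where sp: "S = ys @ v # us @ rho # ws"
    using visits_before_split[OF ds vb] .
  have p: "simple_path E i v (ys @ [v])"
    using simple_path_prefix[of E i out ys v "us @ rho # ws"] S(2) sp by simp
  moreover have "rho \<notin> set (ys @ [v])"
    using ds sp by auto
  moreover have "i \<in> V"
    using S(1) I_subset by blast
  ultimately have "(i, v) \<in> (Restr E (V - {rho}))\<^sup>*" "i \<noteq> rho"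
    using simple_path_rtrancl_avoiding simple_path_hd_in[OF p] by auto
  moreover have "v \<in> V" "v \<noteq> rho"
    using simple_path_in_V[OF S(2) \<open>i \<in> V\<close>] sp ds by auto
  ultimately show ?thesis
    unfolding pre_rho_def using S(1) by blast
qed

lemma notin_pre_rho_if_after_rho:
  assumes S: "i \<in> I" "simple_path E i out S" and vb: "visits_before S rho v"
  shows "v \<notin> pre_rho"
proof
  assume v: "v \<in> pre_rho"
  have ds: "distinct S"
    using simple_path_distinct S(2) by metis
  obtain ys us ws where sp: "S = ys @ rho # us @ v # ws"
    using visits_before_split[OF ds vb] .
  have "simple_path E v out (v # ws)"
    using simple_path_suffix[of E i out "ys @ rho # us" v ws] S(2) sp by simp
  moreover have "rho \<notin> set (v # ws)"
    using ds sp by auto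
  ultimately have "(v, out) \<in> (Restr E (V - {rho}))\<^sup>*"
    using simple_path_rtrancl_avoiding v pre_rho_subset_V by blast
  then show False
    using pre_rho_not_reaches_out v by blast
qed

lemma in_pre_rho_on_path_iff:
  assumes S: "i \<in> I" "simple_path E i out S" and x: "x \<in> set S" "x \<noteq> rho"
  shows "x \<in> pre_rho \<longleftrightarrow> visits_before S x rho"
  using visits_before_total[OF simple_path_distinct[OF S(2)] x(1) rho_in_path[OF S] x(2)]
    in_pre_rho_if_before_rho[OF S] notin_pre_rho_if_after_rho[OF S] by blast

lemma reaches_rho_within:
  assumes "(y, out) \<in> (Restr E Z)\<^sup>*" "y \<in> pre_rho"
  shows "(y, rho) \<in> (Restr E (Z \<inter> insert rho pre_rho))\<^sup>*"
  using assms
proof (induction rule: converse_rtrancl_induct)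
  case base
  then show ?case using out_notin_pre_rho by simp
next
  case (step y z)
  then have yz: "(y, z) \<in> E" "y \<in> Z" "z \<in> Z"
    by auto
  show ?case
  proof (cases "z = rho")
    case True
    then show ?thesis
      using yz step(4) by (auto intro: r_into_rtrancl)
  next
    case False
    have "z \<in> V" "y \<in> V - {rho}"
      using yz E_subset step(4) unfolding pre_rho_def by auto
    then have "z \<in> pre_rho"
      using pre_rho_closed[OF step(4)] yz False by blast
    moreover have "(y, z) \<in> Restr E (Z \<inter> insert rho pre_rho)"
      using yz step(4) calculation by blast
    ultimately show ?thesis
      using step(3) by (meson converse_rtrancl_into_rtrancl)
  qed
qed

section \<open>The input counterweight block\<close>

abbreviation "hm \<equiv> hmat V E I out"

lemma hm_nonzero_iff:
  "r \<in> V \<Longrightarrow> c \<in> V \<Longrightarrow> hm r c \<noteq> None \<longleftrightarrow> (if c = out then r \<in> I else c = r \<or> (c, r) \<in> E)"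
  using hmat_nonzero_iff by metis

lemma hm_zero_below_counterweight:
  assumes x: "x \<in> V" "x \<notin> insert rho pre_rho" and c: "c \<in> insert out pre_rho"
  shows "hm x c = None"
proof (rule ccontr)
  assume nz: "hm x c \<noteq> None"
  show False
  proof (cases "c = out")
    case True
    then show False
      using hm_nonzero_iff x nz c out_in_V inputs_subset by auto
  next
    case False
    then have cH: "c \<in> pre_rho" "c \<noteq> x"
      using c x by auto
    then have "(c, x) \<in> E"
      using hm_nonzero_iff[OF x(1), of c] nz False pre_rho_subset_V by auto
    then have "(c, x) \<in> (Restr E (V - {rho}))\<^sup>*"
      using x cH pre_rho_subset_V rho_notin_pre_rho by blast
    then show False
      using pre_rho_closed[OF cH(1)] x(2) by blast
  qed
qed

lemma hm_diag: "a \<in> V \<Longrightarrow> a \<noteq> out \<Longrightarrow> hm a a \<noteq> None"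
  using hm_nonzero_iff by simp

lemma hm_arrow: "(c, a) \<in> E \<Longrightarrow> c \<noteq> out \<Longrightarrow> hm a c \<noteq> None"
  using hm_nonzero_iff E_subset by auto

lemma hm_input: "a \<in> I \<Longrightarrow> hm a out \<noteq> None"
  using hm_nonzero_iff I_subset out_in_V by auto

text \<open>Let \<open>B'\<close> be a set of counterweight columns containing all nonzero columns of the rows
  \<open>A\<close>, as arises from a zero block. The diagonal of \<open>\<langle>H\<rangle>\<close> puts \<open>A - {rho}\<close> into \<open>B'\<close>, and the
  arrows let nonzero columns propagate backwards along the network.\<close>

lemma covered_rows_contain_rho:
  assumes A: "A \<subseteq> insert rho pre_rho" "A \<noteq> {}" and B': "B' \<subseteq> insert out pre_rho" "card B' \<le> card A"
    and cover: "\<And>a c. a \<in> A \<Longrightarrow> c \<in> insert out pre_rho \<Longrightarrow> hm a c \<noteq> None \<Longrightarrow> c \<in> B'"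
  shows "rho \<in> A"
proof (rule ccontr)
  assume "rho \<notin> A"
  then have AH: "A \<subseteq> pre_rho"
    using A(1) by blast
  have "a \<in> B'" if "a \<in> A" for a
    using that cover[OF that _ hm_diag] AH pre_rho_subset_V out_notin_pre_rho by blast
  then have "A \<subseteq> B'" ..
  moreover have "finite B'"
    using B'(1) finite_pre_rho finite_subset by auto
  ultimately have AB': "A = B'"
    using B'(2) card_subset_eq card_mono by (metis antisym)
  obtain a where a: "a \<in> A"
    using A(2) by blast
  then obtain i where i: "i \<in> I" "(i, a) \<in> (Restr E pre_rho)\<^sup>*"
    using pre_rho_from_input AH by blast
  have "x \<in> A" if "(x, a) \<in> (Restr E pre_rho)\<^sup>*" for x
    using that
  proof (induction rule: converse_rtrancl_induct)
    case (step x y)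
    then have "x \<in> pre_rho" "hm y x \<noteq> None"
      using hm_arrow out_notin_pre_rho by auto
    then show ?case
      using cover[OF step(3)] AB' by blast
  qed (rule a)
  then have "out \<in> A"
    using i cover[OF _ _ hm_input] AB' by blast
  then show False
    using AH out_notin_pre_rho by blast
qed

lemma covered_rows_backward_closed:
  assumes A: "rho \<in> A" and B': "B' \<subseteq> insert e A"
    and cover: "\<And>a c. a \<in> A \<Longrightarrow> c \<in> insert out pre_rho \<Longrightarrow> hm a c \<noteq> None \<Longrightarrow> c \<in> B'"
    and path: "(y, rho) \<in> (Restr E (Z \<inter> insert rho pre_rho))\<^sup>*" and e: "e \<notin> Z \<inter> pre_rho"
  shows "y \<in> A"
  using path
proof (induction rule: converse_rtrancl_induct)
  case (step x y)
  show ?case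
  proof (cases "x = rho")
    case False
    then have "x \<in> pre_rho \<inter> Z" "(x, y) \<in> E"
      using step(1) by auto
    then have "x \<in> B'" "x \<noteq> e"
      using cover[OF step(3) _ hm_arrow] out_notin_pre_rho e by auto
    then show ?thesis
      using B' by blast
  qed (use A in simp)
qed (rule A)

lemma covered_rows_with_rho:
  assumes A: "A \<subseteq> insert rho pre_rho" "rho \<in> A" and B': "B' \<subseteq> insert out pre_rho" "card B' = card A"
    and cover: "\<And>a c. a \<in> A \<Longrightarrow> c \<in> insert out pre_rho \<Longrightarrow> hm a c \<noteq> None \<Longrightarrow> c \<in> B'"
  shows "A = insert rho pre_rho"
proof -
  have finA: "finite A" and finB': "finite B'"
    using A(1) B'(1) finite_pre_rho finite_subset by auto
  have sub: "A - {rho} \<subseteq> B'"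
    using cover[OF _ _ hm_diag] A(1) pre_rho_subset_V out_notin_pre_rho by blast
  moreover have "card A \<ge> 1"
    using A(2) finA by (metis One_nat_def Suc_leI card_gt_0_iff empty_iff)
  ultimately have "card (B' - (A - {rho})) = 1"
    using A(2) B'(2) finA card_Diff_subset[OF finite_subset[OF sub finB'] sub] by simp
  then obtain e where "B' - (A - {rho}) = {e}"
    by (rule card_1_singletonE)
  then have e: "e \<in> insert out pre_rho" "B' \<subseteq> insert e A" "B' \<subseteq> insert e (A - {rho})"
    using B'(1) by blast+
  have closed: "y \<in> A"
    if "(y, rho) \<in> (Restr E (Z \<inter> insert rho pre_rho))\<^sup>*" "e \<notin> Z \<inter> pre_rho" for y Z
    using covered_rows_backward_closed[OF A(2) e(2)] cover that by blast
  show ?thesis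
  proof (cases "e = out")
    case True
    have "x \<in> A" if "x \<in> pre_rho" for x
    proof -
      have "(x, out) \<in> (Restr E V)\<^sup>*"
        using reaches_out that pre_rho_subset_V Restr_E_V by auto
      then show ?thesis
        using closed reaches_rho_within that True out_notin_pre_rho by blast
    qed
    then show ?thesis using A by blast
  next
    case False
    then have eH: "e \<in> pre_rho"
      using e(1) by blast
    have noI: "a \<notin> I" if "a \<in> A" for a
    proof
      assume "a \<in> I"
      then have "out \<in> B'"
        using cover[OF that] hm_input by blast
      then show False
        using e(3) False A(1) out_notin_pre_rho by blast
    qed
    have "super_simple e"
      unfolding super_simple_iff
    proof (intro conjI ballI impI notI)
      fix i assume i: "i \<in> I" "i \<noteq> e" "(i, out) \<in> (Restr E (V - {e}))\<^sup>*"
      then have "i \<in> pre_rho"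
        using noI[OF A(2)] input_in_pre_rho by blast
      then show False
        using closed[OF reaches_rho_within[OF i(3)]] noI i(1) by blast
    qed (use eH pre_rho_subset_V in blast)
    moreover obtain i S where "i \<in> I" "simple_path E i out S"
      using input_simple_path two_distinct_inputs by metis
    ultimately show ?thesis
      using rho_first notin_pre_rho_if_after_rho eH rho_notin_pre_rho by metis
  qed
qed

lemma fully_indecomposable_counterweight:
  "fully_indecomposable hm (insert rho pre_rho) (insert out pre_rho)"
  unfolding fully_indecomposable_def
proof (intro conjI allI impI)
  show "finite (insert rho pre_rho)" "finite (insert out pre_rho)"
    using finite_pre_rho by auto
  show card: "card (insert rho pre_rho) = card (insert out pre_rho)"
    using finite_pre_rho rho_notin_pre_rho out_notin_pre_rho by simp
  show "1 \<le> card (insert rho pre_rho)"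
    using finite_pre_rho by (simp add: card_gt_0_iff Suc_leI)
  show "\<forall>r\<in>insert rho pre_rho. \<forall>c\<in>insert out pre_rho. hm r c \<noteq> None"
    if "card (insert rho pre_rho) = 1"
    using that finite_pre_rho pre_rho_nonempty rho_notin_pre_rho by simp
next
  fix A B
  assume AB: "A \<subseteq> insert rho pre_rho" "B \<subseteq> insert out pre_rho" "A \<noteq> {}" "B \<noteq> {}"
    "card A + card B = card (insert rho pre_rho)"
  show "\<exists>a\<in>A. \<exists>c\<in>B. hm a c \<noteq> None"
  proof (rule ccontr)
    assume zero: "\<not> (\<exists>a\<in>A. \<exists>c\<in>B. hm a c \<noteq> None)"
    define B' where "B' = insert out pre_rho - B"
    have "card B' = card A"
      unfolding B'_def using AB(2,5) finite_pre_rho rho_notin_pre_rho out_notin_pre_rho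
      by (simp add: card_Diff_subset finite_subset)
    moreover have cover: "c \<in> B'" if "a \<in> A" "c \<in> insert out pre_rho" "hm a c \<noteq> None" for a c
      unfolding B'_def using that zero by blast
    ultimately have "A = insert rho pre_rho"
      using covered_rows_with_rho covered_rows_contain_rho AB(1,3) Diff_subset
      unfolding B'_def by (metis order.refl)
    then show False
      using AB(4,5) finite_pre_rho rho_notin_pre_rho finite_subset[OF AB(2)] by simp
  qed
qed

text \<open>A simple path \<open>S = [i, \<dots>, out]\<close> from an input gives a perfect matching of \<open>\<langle>H\<rangle>\<close>:
  row \<open>S ! Suc j\<close> is matched with column \<open>S ! j\<close> (an arrow of \<open>S\<close>), row \<open>i\<close> with the input
  column \<open>out\<close>, and every node off \<open>S\<close> with itself.\<close>

context
  fixes i S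
  assumes i: "i \<in> I" and S: "simple_path E i out S"
begin

lemma path_matching_cases [consumes 1, case_names input arrow]:
  assumes "x \<in> set S"
  obtains "x = i" "cycle_of_list (rev S) x = out"
  | j where "Suc j < length S" "x = S ! Suc j" "cycle_of_list (rev S) x = S ! j"
proof -
  have S: "distinct S" "S \<noteq> []" "S ! 0 = i" "last S = out"
    using S unfolding simple_path_def by (auto simp: hd_conv_nth)
  obtain p where p: "p < length S" "x = S ! p"
    using assms by (metis in_set_conv_nth)
  show ?thesis
  proof (cases p)
    case 0
    then show ?thesis
      using that(1) p S cycle_of_list_rev_0 by auto
  next
    case (Suc j)
    then show ?thesis
      using that(2) p S cycle_of_list_rev_Suc by auto
  qed
qed

lemma path_nth_ne_out:
  assumes "Suc j < length S"
  shows "S ! j \<noteq> out"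
proof -
  have "S ! (length S - 1) = out" "distinct S"
    using S unfolding simple_path_def by (auto simp: last_conv_nth)
  moreover have "j \<noteq> length S - 1" "j < length S" "length S - 1 < length S"
    using assms by auto
  ultimately show ?thesis
    using nth_eq_iff_index_eq by metis
qed

lemma path_matching_permutes: "cycle_of_list (rev S) permutes V"
  using cycle_permutes[of "rev S"] permutes_subset simple_path_in_V[OF S] I_subset i by auto

lemma path_matching_input: "cycle_of_list (rev S) i = out"
  using cycle_of_list_rev_0[OF simple_path_distinct[OF S]] S unfolding simple_path_def
  by (metis hd_conv_nth)

lemma perfect_matching_path: "perfect_matching hm (cycle_of_list (rev S)) V V"
  unfolding perfect_matching_def
proof (intro conjI ballI)
  show "bij_betw (cycle_of_list (rev S)) V V"
    using permutes_imp_bij[OF path_matching_permutes] .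
next
  fix r assume r: "r \<in> V"
  show "hm r (cycle_of_list (rev S) r) \<noteq> None"
  proof (cases "r \<in> set S")
    case False
    then show ?thesis
      using hm_diag[OF r] id_outside_supp[of r "rev S"] simple_path_last_in[OF S] by auto
  next
    case True
    then show ?thesis
    proof (cases rule: path_matching_cases)
      case input
      then show ?thesis using hm_input i by metis
    next
      case (arrow j)
      have "S ! j \<noteq> out"
        using path_nth_ne_out arrow(1) .
      moreover have "(S ! j, S ! Suc j) \<in> E"
        using arrow(1) S successively_nth unfolding simple_path_def by fast
      ultimately show ?thesis
        using arrow hm_arrow by simp
    qed
  qed
qed

lemma path_nth_in_pre_rho_iff:
  assumes "p < length S" "q < length S" "S ! q = rho"
  shows "S ! p \<in> pre_rho \<longleftrightarrow> p < q"
proof (cases "p = q")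
  case False
  then have "S ! p \<noteq> rho"
    using assms simple_path_distinct[OF S] nth_eq_iff_index_eq by metis
  then show ?thesis
    using in_pre_rho_on_path_iff[OF i S] visits_before_nth_iff[OF simple_path_distinct[OF S]] assms
    by (metis nth_mem)
qed (use assms rho_notin_pre_rho in simp)

lemma path_matching_counterweight_iff:
  assumes x: "x \<in> V"
  shows "x \<in> insert rho pre_rho \<longleftrightarrow> cycle_of_list (rev S) x \<in> insert out pre_rho"
proof (cases "x \<in> set S")
  case False
  then have "x \<noteq> rho" "x \<noteq> out"
    using rho_in_path[OF i S] simple_path_last_in[OF S] by auto
  then show ?thesis
    using id_outside_supp[of x "rev S"] False by simp
next
  case True
  obtain q where q: "q < length S" "S ! q = rho"
    using rho_in_path[OF i S] by (metis in_set_conv_nth)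
  from True show ?thesis
  proof (cases rule: path_matching_cases)
    case input
    then have "x \<in> insert rho pre_rho" "cycle_of_list (rev S) x \<in> insert out pre_rho"
      using inputs_subset i by auto
    then show ?thesis by blast
  next
    case (arrow j)
    have "S ! j \<noteq> out"
      using path_nth_ne_out arrow(1) .
    then have "cycle_of_list (rev S) x \<in> insert out pre_rho \<longleftrightarrow> j < q"
      using arrow q path_nth_in_pre_rho_iff[of j q] by auto
    moreover have "S ! Suc j = rho \<longleftrightarrow> Suc j = q"
      using nth_eq_iff_index_eq[OF simple_path_distinct[OF S] arrow(1) q(1)] q(2) by simp
    then have "x \<in> insert rho pre_rho \<longleftrightarrow> Suc j \<le> q"
      using arrow q path_nth_in_pre_rho_iff[of "Suc j" q] by auto
    ultimately show ?thesis
      by (simp add: Suc_le_eq)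
  qed
qed

lemma path_matching_counterweight:
  "cycle_of_list (rev S) ` insert rho pre_rho = insert out pre_rho"
proof
  have YV: "insert rho pre_rho \<subseteq> V" and CYV: "insert out pre_rho \<subseteq> V"
    using rho_in_V out_in_V pre_rho_subset_V by auto
  show "cycle_of_list (rev S) ` insert rho pre_rho \<subseteq> insert out pre_rho"
    using path_matching_counterweight_iff YV by blast
  show "insert out pre_rho \<subseteq> cycle_of_list (rev S) ` insert rho pre_rho"
  proof
    fix c assume c: "c \<in> insert out pre_rho"
    then obtain x where "x \<in> V" "c = cycle_of_list (rev S) x"
      using permutes_image[OF path_matching_permutes] CYV by (metis imageE subsetD)
    then show "c \<in> cycle_of_list (rev S) ` insert rho pre_rho"
      using path_matching_counterweight_iff c by blast
  qed
qed

end

lemma btf_block_of_out: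
  assumes btf: "btf_decomp hm V V bs" and k: "k < length bs" and out: "out \<in> snd (bs ! k)"
  shows "fst (bs ! k) = insert rho pre_rho \<and> snd (bs ! k) = insert out pre_rho"
proof -
  obtain i S where S: "i \<in> I" "simple_path E i out S"
    using input_simple_path two_distinct_inputs by metis
  define \<mu> where "\<mu> = cycle_of_list (rev S)"
  define D where "D = matching_graph hm \<mu> V"
  have pm: "perfect_matching hm \<mu> V V"
    unfolding \<mu>_def using perfect_matching_path[OF S] .
  have Y: "\<mu> ` insert rho pre_rho = insert out pre_rho" "insert rho pre_rho \<subseteq> V"
    unfolding \<mu>_def using path_matching_counterweight[OF S] rho_in_V pre_rho_subset_V by auto
  have blockV: "fst (bs ! k) \<subseteq> V"
    using btf k unfolding btf_decomp_def by blast
  obtain r where r: "r \<in> fst (bs ! k)" "\<mu> r = out"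
    using btf_decomp_block_matching[OF btf pm k] out by (metis imageE)
  moreover have "\<mu> i = out" "i \<in> V" "inj_on \<mu> V"
    unfolding \<mu>_def using path_matching_input[OF S] S(1) I_subset
      permutes_inj_on[OF path_matching_permutes[OF S]] by auto
  ultimately have "i \<in> fst (bs ! k)"
    using blockV by (metis inj_onD subsetD)
  then have block: "fst (bs ! k) = scc_of D i"
    unfolding D_def using btf_decomp_block_eq_scc_of[OF btf pm k] by blast
  have "insert rho pre_rho \<subseteq> scc_of D i"
  proof
    fix x assume x: "x \<in> insert rho pre_rho"
    have "perfect_matching hm \<mu> (insert rho pre_rho) (insert out pre_rho)"
      using perfect_matching_subset[OF pm Y(2)] Y(1) by simp
    note sc = fully_indecomposable_imp_strongly_connected[OF fully_indecomposable_counterweight this]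
    have "i \<in> insert rho pre_rho"
      using inputs_subset S(1) by blast
    then show "x \<in> scc_of D i"
      unfolding scc_of_def D_def
      using rtrancl_matching_graph_mono[OF Y(2) sc] x by blast
  qed
  moreover have "x \<in> insert rho pre_rho" if "(x, i) \<in> D\<^sup>*" for x
    using that
  proof (induction rule: converse_rtrancl_induct)
    case (step x y)
    then have "x \<in> V" "hm x (\<mu> y) \<noteq> None" "\<mu> y \<in> insert out pre_rho"
      using Y(1) unfolding D_def matching_graph_def by auto
    then show ?case
      using hm_zero_below_counterweight[of x "\<mu> y"] by (metis option.distinct(1))
  qed (use inputs_subset S(1) in blast)
  ultimately have "fst (bs ! k) = insert rho pre_rho"
    using block unfolding scc_of_def by blast
  then show ?thesis
    using btf_decomp_block_matching[OF btf pm k] Y(1) by simp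
qed

section \<open>The input counterweight subnetwork\<close>

lemma between_ss_if_after_rho:
  assumes u: "abs_simple E I out u" "\<not> super_simple u"
    and Su: "i \<in> I" "simple_path E i out Su" "visits_before Su rho u"
  shows "between_ss V E I out u"
proof -
  have d: "distinct Su"
    using simple_path_distinct Su(2) by metis
  obtain pr pu where p: "pr < pu" "pu < length Su" "Su ! pr = rho" "Su ! pu = u"
    using Su(3) by (metis visits_before_cases)
  have last: "Su ! (length Su - 1) = out" "u \<noteq> out"
    using Su(2) u(2) super_simple_out unfolding simple_path_def by (auto simp: last_conv_nth)
  then have "pu < length Su - 1"
    using p by (metis diff_Suc_1 less_SucE nat_neq_iff Suc_pred' gr_implies_not0)
  then obtain pa pb where pab: "pa < pu" "pu < pb" "pb \<le> length Su - 1"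
    "super_simple (Su ! pa)" "super_simple (Su ! pb)"
    "\<And>q. pa < q \<Longrightarrow> q < pb \<Longrightarrow> q \<noteq> pu \<Longrightarrow> \<not> super_simple (Su ! q)"
    using nearest_indices_around[of pr pu "length Su - 1" "\<lambda>q. super_simple (Su ! q)"]
      p last super_simple_rho super_simple_out by auto
  have pbl: "pb < length Su"
    using pab(3) p by linarith
  have before: "visits_before Su (Su ! pa) u" "visits_before Su u (Su ! pb)"
    using visits_before_nth_iff[OF d] pab p pbl by (metis order.strict_trans)+
  have greater: "ss_greater E I out (Su ! pa) (Su ! pb)"
    unfolding ss_greater_def
    using super_simple_order_consistent[OF pab(4,5) Su(1,2)] visits_before_trans[OF d before] by blast
  have "\<not> (\<exists>r. super_simple r \<and> ss_greater E I out (Su ! pa) r \<and> ss_greater E I out r (Su ! pb))"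
  proof
    assume "\<exists>r. super_simple r \<and> ss_greater E I out (Su ! pa) r \<and> ss_greater E I out r (Su ! pb)"
    then obtain r where r: "super_simple r" "visits_before Su (Su ! pa) r" "visits_before Su r (Su ! pb)"
      using Su(1,2) unfolding ss_greater_def by blast
    then obtain q where q: "q < length Su" "Su ! q = r"
      by (metis in_set_conv_nth visits_before_set)
    then have "pa < q" "q < pb" "q \<noteq> pu"
      using r visits_before_nth_iff[OF d] pab p pbl u(2) by (metis order.strict_trans)+
    then show False
      using pab(6) r(1) q(2) by blast
  qed
  then have "adjacent_ss V E I out (Su ! pa) (Su ! pb)"
    unfolding adjacent_ss_def using pab(4,5) greater by blast
  then show ?thesis
    unfolding between_ss_def using u(1) Su(1,2) before by blast
qed

lemma not_between_ss_if_pre_rho: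
  assumes "u \<in> pre_rho"
  shows "\<not> between_ss V E I out u"
proof
  assume "between_ss V E I out u"
  then obtain a b i S where ab: "adjacent_ss V E I out a b" "i \<in> I" "simple_path E i out S"
    "visits_before S a u"
    unfolding between_ss_def by blast
  have "visits_before S rho u"
  proof (cases "a = rho")
    case False
    then show ?thesis
      using rho_first ab visits_before_trans simple_path_distinct unfolding adjacent_ss_def by metis
  qed (use ab in simp)
  then show False
    using notin_pre_rho_if_after_rho ab(2,3) assms by blast
qed

lemma reach_from_pre_rho:
  assumes "(x, w) \<in> E\<^sup>*" "x \<in> pre_rho"
  shows "w \<in> pre_rho \<or> (rho, w) \<in> E\<^sup>*"
  using assms(1)
proof (induction rule: rtrancl_induct)
  case (step y z)
  show ?case
  proof (cases "y \<in> pre_rho \<and> z \<noteq> rho")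
    case True
    then have "(y, z) \<in> Restr E (V - {rho})"
      using step(2) E_subset rho_notin_pre_rho by blast
    then show ?thesis
      using pre_rho_closed True by blast
  next
    case False
    then show ?thesis
      using step by (meson rtrancl.rtrancl_into_rtrancl rtrancl.rtrancl_refl)
  qed
qed (use assms(2) in simp)

lemma downstream_if_notin_counterweight:
  assumes v: "v \<in> V" "v \<notin> insert rho pre_rho" and i: "i \<in> I"
  shows "downstream E i v"
proof -
  obtain i0 where i0: "i0 \<in> I" "(i0, v) \<in> E\<^sup>*"
    using reached_from_input[OF v(1)] by blast
  have "(rho, v) \<in> E\<^sup>*"
  proof (cases "i0 = rho")
    case False
    then show ?thesis
      using reach_from_pre_rho[OF i0(2) input_in_pre_rho[OF i0(1)]] v(2) by blast
  qed (use i0 in simp)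
  moreover obtain S where S: "simple_path E i out S"
    using input_simple_path[OF i] .
  then have "(i, rho) \<in> E\<^sup>*"
    using simple_path_mem_rtrancl(1)[OF S rho_in_path[OF i S]] rtrancl_mono[of "Restr E (set S)" E]
    by blast
  ultimately show ?thesis
    unfolding downstream_def by (rule rtrancl_trans[rotated])
qed

text \<open>A node after \<open>rho\<close> on one input-output simple path lies on such a path from every input:
  follow any path from the input to \<open>rho\<close> and continue along the first path, the two parts
  being disjoint because the first lies in \<open>pre_rho\<close> and the second outside.\<close>

lemma i_simple_if_notin_counterweight:
  assumes v: "v \<notin> insert rho pre_rho" and S: "i \<in> I" "simple_path E i out S" "v \<in> set S"
    and i': "i' \<in> I"
  shows "i_simple E out i' v"
proof -
  have ds: "distinct S"
    using simple_path_distinct S(2) by metis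
  have "visits_before S rho v"
    using in_pre_rho_on_path_iff[OF S(1,2,3)] visits_before_total[OF ds S(3) rho_in_path[OF S(1,2)]] v
    by blast
  then obtain ys us ws where sp: "S = ys @ rho # us @ v # ws"
    using visits_before_split[OF ds] by metis
  have p2: "simple_path E rho out (rho # us @ v # ws)"
    using simple_path_suffix[of E i out ys rho "us @ v # ws"] S(2) sp by simp
  obtain S' where S': "simple_path E i' out S'"
    using input_simple_path[OF i'] .
  obtain ys' zs' where sp': "S' = ys' @ rho # zs'"
    using rho_in_path[OF i' S'] by (meson split_list)
  have p1: "simple_path E i' rho (ys' @ [rho])"
    using simple_path_prefix S' sp' by metis
  have "set ys' \<subseteq> pre_rho"
  proof
    fix w assume "w \<in> set ys'"
    then obtain a1 a2 where "ys' = a1 @ w # a2"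
      by (meson split_list)
    then have "visits_before S' w rho"
      using visits_before_appendI[of a1 w a2 rho zs'] sp' simple_path_distinct[OF S'] by simp
    then show "w \<in> pre_rho"
      using in_pre_rho_if_before_rho[OF i' S'] by blast
  qed
  moreover have "set (us @ v # ws) \<inter> pre_rho = {}"
  proof -
    have "visits_before S rho w" if "w \<in> set (us @ v # ws)" for w
      using that visits_before_appendI[of ys rho] sp ds by (metis split_list)
    then show ?thesis
      using notin_pre_rho_if_after_rho[OF S(1,2)] by blast
  qed
  ultimately have "set (ys' @ [rho]) \<inter> set (rho # us @ v # ws) \<subseteq> {rho}"
    by auto
  from simple_path_append[OF p1 p2 this]
  show ?thesis
    unfolding i_simple_def by fastforce
qed

lemma abs_simple_if_notin_counterweight:
  assumes "v \<in> V" "v \<notin> insert rho pre_rho" "\<not> abs_appendage E I out v"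
  shows "abs_simple E I out v"
proof -
  obtain i where i: "i \<in> I" "i_simple E out i v"
    using assms downstream_if_notin_counterweight unfolding abs_appendage_def i_appendage_def by blast
  then obtain S where "simple_path E i out S" "v \<in> set S"
    unfolding i_simple_def by blast
  then show ?thesis
    unfolding abs_simple_def using i_simple_if_notin_counterweight assms(2) i(1) by blast
qed

lemma between_ss_if_cs_path_equiv_outside:
  assumes S: "i \<in> I" "simple_path E i out S" and v: "v \<notin> insert rho pre_rho"
    and u: "cs_path_equiv V E S v u" "\<not> abs_appendage E I out u"
  shows "between_ss V E I out u"
proof -
  have C: "u \<in> V - set S" "(u, v) \<in> (Restr E (V - set S))\<^sup>*"
    using u(1) unfolding cs_path_equiv_def Let_def by auto
  have "V - set S \<subseteq> V - {rho}"
    using rho_in_path[OF S] by blast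
  then have "u \<notin> pre_rho"
    using pre_rho_closed rtrancl_Restr_mono[OF C(2)] v by blast
  moreover have "u \<noteq> rho"
    using C(1) rho_in_path[OF S] by blast
  ultimately have "abs_simple E I out u"
    using abs_simple_if_notin_counterweight u(2) C(1) by blast
  moreover have "\<not> super_simple u"
    using simple_path_avoiding_imp_not_super_simple[OF S] C(1) by blast
  moreover obtain i' S' where S': "i' \<in> I" "simple_path E i' out S'" "u \<in> set S'"
    using \<open>abs_simple E I out u\<close> S(1) unfolding abs_simple_def i_simple_def by blast
  moreover have "visits_before S' rho u"
    using in_pre_rho_on_path_iff[OF S'] \<open>u \<notin> pre_rho\<close> \<open>u \<noteq> rho\<close>
      visits_before_total[OF simple_path_distinct[OF S'(2)] S'(3) rho_in_path[OF S'(1,2)]] by blast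
  ultimately show ?thesis
    using between_ss_if_after_rho by blast
qed

lemma W_nodes_subset_counterweight: "W_nodes V E I out \<subseteq> insert rho pre_rho"
proof
  fix v assume vW: "v \<in> W_nodes V E I out"
  show "v \<in> insert rho pre_rho"
  proof (rule ccontr)
    assume vY: "v \<notin> insert rho pre_rho"
    have vV: "v \<in> V"
      using vW unfolding W_nodes_def by simp
    consider "v \<in> I" | "v = rho"
      | "\<exists>i\<in>I. \<exists>S. simple_path E i out S \<and> visits_before S v rho"
      | "\<not> abs_appendage E I out v \<and> \<not> abs_simple E I out v"
      | i S u where "i \<in> I" "simple_path E i out S" "\<not> abs_appendage E I out u"
          "\<not> between_ss V E I out u" "cs_path_equiv V E S v u"
      using vW unfolding W_nodes_def by blast
    then show False
    proof cases
      case 3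
      then show False
        using in_pre_rho_if_before_rho vY by blast
    next
      case 4
      then show False
        using abs_simple_if_notin_counterweight vV vY by blast
    next
      case (5 i S u)
      then show False
        using between_ss_if_cs_path_equiv_outside vY by blast
    qed (use vY inputs_subset in auto)
  qed
qed

lemma counterweight_matching_avoiding:
  assumes v: "v \<in> pre_rho" and S0: "i0 \<in> I" "simple_path E i0 out S0" "v \<notin> set S0"
  obtains p where "perfect_matching hm p (insert rho pre_rho - {i0}) (insert out pre_rho - {v})"
proof -
  define \<mu> where "\<mu> = cycle_of_list (rev S0)"
  define D where "D = matching_graph hm \<mu> (insert rho pre_rho)"
  have YV: "insert rho pre_rho \<subseteq> V"
    using rho_in_V pre_rho_subset_V by auto
  have pm: "perfect_matching hm \<mu> (insert rho pre_rho) (insert out pre_rho)"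
    using perfect_matching_subset[OF perfect_matching_path[OF S0(1,2)] YV]
      path_matching_counterweight[OF S0(1,2)] unfolding \<mu>_def by simp
  have Y: "i0 \<in> insert rho pre_rho" "v \<in> insert rho pre_rho"
    using inputs_subset S0(1) v by auto
  then have "(v, i0) \<in> D\<^sup>*"
    using fully_indecomposable_imp_strongly_connected[OF fully_indecomposable_counterweight pm]
    unfolding D_def by blast
  moreover have "Restr D (insert rho pre_rho) = D"
    unfolding D_def matching_graph_def by auto
  ultimately obtain xs where "simple_path D v i0 xs"
    using rtrancl_imp_simple_path Y(2) by metis
  moreover have "\<mu> v = v"
    unfolding \<mu>_def using id_outside_supp[of v "rev S0"] S0(3) by simp
  ultimately show ?thesis
    using that perfect_matching_shift_along_path[OF pm Y(2)] unfolding D_def by metis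
qed

text \<open>Feeding each row \<open>x\<close> of such a matching \<open>p\<close> from its column, \<open>p x \<rightarrow> x\<close> unless \<open>p x\<close> is
  the input column, gives a single-valued relation along arrows in which \<open>rho\<close> and \<open>v\<close> are
  sinks and every source is an input: either \<open>i0\<close> or a row fed by the input column.\<close>

lemma counterweight_feeding_relation:
  assumes v: "v \<in> pre_rho" and S0: "i0 \<in> I" "simple_path E i0 out S0" "v \<notin> set S0"
  obtains F where "single_valued F" "F \<subseteq> Id \<union> E" "F \<subseteq> pre_rho \<times> insert rho pre_rho"
    "\<And>b. (v, b) \<notin> F" "\<And>b. (rho, b) \<notin> F"
    "\<And>s. s \<in> insert rho pre_rho \<Longrightarrow> (\<And>a. (a, s) \<notin> F) \<Longrightarrow> s \<in> I"
proof -
  obtain p where "perfect_matching hm p (insert rho pre_rho - {i0}) (insert out pre_rho - {v})"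
    using counterweight_matching_avoiding[OF assms] .
  then have inj: "inj_on p (insert rho pre_rho - {i0})"
    and p: "\<And>x. x \<in> insert rho pre_rho - {i0} \<Longrightarrow> p x \<in> insert out pre_rho - {v} \<and> hm x (p x) \<noteq> None"
    unfolding perfect_matching_def bij_betw_def by auto
  define F where "F = {(p x, x) | x. x \<in> insert rho pre_rho - {i0} \<and> p x \<noteq> out}"
  have YV: "insert rho pre_rho \<subseteq> V"
    using rho_in_V pre_rho_subset_V by auto
  show ?thesis
  proof
    show "single_valued F"
      unfolding F_def single_valued_def using inj by (auto dest: inj_onD)
    show "F \<subseteq> Id \<union> E"
    proof
      fix e assume "e \<in> F"
      then obtain x where x: "e = (p x, x)" "x \<in> insert rho pre_rho - {i0}" "p x \<noteq> out"
        unfolding F_def by blast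
      then have "p x \<in> V" "x \<in> V"
        using p[OF x(2)] YV pre_rho_subset_V by auto
      then show "e \<in> Id \<union> E"
        using p[OF x(2)] hm_nonzero_iff x by auto
    qed
    show F: "F \<subseteq> pre_rho \<times> insert rho pre_rho"
      unfolding F_def using p by blast
    show "(v, b) \<notin> F" "(rho, b) \<notin> F" for b
      using p rho_notin_pre_rho F unfolding F_def by blast+
    fix s assume s: "s \<in> insert rho pre_rho" "\<And>a. (a, s) \<notin> F"
    show "s \<in> I"
    proof (cases "s = i0")
      case False
      then have "p s = out" "hm s (p s) \<noteq> None"
        using s p unfolding F_def by blast+
      then have "hm s out \<noteq> None"
        by simp
      then show ?thesis
        using hm_nonzero_iff[OF _ out_in_V, of s] s(1) YV by auto
    qed (use S0(1) in simp)
  qed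
qed

lemma disjoint_input_paths:
  assumes v: "v \<in> pre_rho" and S0: "i0 \<in> I" "simple_path E i0 out S0" "v \<notin> set S0"
  obtains ia ib Z1 Z2 where "ia \<in> I" "ib \<in> I" "Z1 \<subseteq> insert rho pre_rho" "Z2 \<subseteq> insert rho pre_rho"
    "Z1 \<inter> Z2 = {}" "ia \<in> Z1" "ib \<in> Z2" "(ia, rho) \<in> (Restr E Z1)\<^sup>*" "(ib, v) \<in> (Restr E Z2)\<^sup>*"
proof -
  obtain F where sv: "single_valued F" and FE: "F \<subseteq> Id \<union> E"
    and FY: "F \<subseteq> pre_rho \<times> insert rho pre_rho" and sinks: "\<And>b. (v, b) \<notin> F" "\<And>b. (rho, b) \<notin> F"
    and sources: "\<And>s. s \<in> insert rho pre_rho \<Longrightarrow> (\<And>a. (a, s) \<notin> F) \<Longrightarrow> s \<in> I"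
    using counterweight_feeding_relation[OF assms] by metis
  have anc: "{a. (a, t) \<in> F\<^sup>*} \<subseteq> insert rho pre_rho" if "t \<in> insert rho pre_rho" for t
    using that FY by (auto elim: converse_rtranclE)
  have source: "\<exists>s\<in>I. (s, t) \<in> F\<^sup>*" if t: "t \<in> insert rho pre_rho" "\<And>b. (t, b) \<notin> F" for t
  proof -
    obtain s where "(s, t) \<in> F\<^sup>*" "\<And>a. (a, s) \<notin> F"
      using single_valued_source[OF sv _ t(2)] finite_subset[OF anc[OF t(1)]] finite_pre_rho by blast
    then show ?thesis
      using sources anc[OF t(1)] by blast
  qed
  obtain ia where ia: "ia \<in> I" "(ia, rho) \<in> F\<^sup>*"
    using source[of rho] sinks(2) by blast
  obtain ib where ib: "ib \<in> I" "(ib, v) \<in> F\<^sup>*"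
    using source[of v] sinks(1) v by blast
  have "v \<noteq> rho"
    using v rho_notin_pre_rho by blast
  show ?thesis
  proof (rule that[OF ia(1) ib(1)])
    show "{a. (a, rho) \<in> F\<^sup>*} \<inter> {a. (a, v) \<in> F\<^sup>*} = {}"
      using single_valued_ancestors_disjoint[OF sv sinks(2) sinks(1)] \<open>v \<noteq> rho\<close> by blast
    show "(ia, rho) \<in> (Restr E {a. (a, rho) \<in> F\<^sup>*})\<^sup>*" "(ib, v) \<in> (Restr E {a. (a, v) \<in> F\<^sup>*})\<^sup>*"
      using rtrancl_Restr_ancestors[OF FE] ia(2) ib(2) by blast+
  qed (use anc v ia ib in auto)
qed

lemma reaches_out_via_descendants:
  assumes S: "simple_path E a out S" and v: "v \<in> V - set S"
    and y: "(y, out) \<in> E\<^sup>*" "(v, y) \<in> (Restr E (V - set S))\<^sup>*"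
  shows "(y, out) \<in> (Restr E ({x. (v, x) \<in> (Restr E (V - set S))\<^sup>*} \<union> set S))\<^sup>*"
  using y
proof (induction rule: converse_rtrancl_induct)
  case (step y z)
  let ?Z = "{x. (v, x) \<in> (Restr E (V - set S))\<^sup>*} \<union> set S"
  have "y \<in> V - set S"
    using step(4) v by (auto elim: rtranclE)
  show ?case
  proof (cases "z \<in> set S")
    case True
    then have "(z, out) \<in> (Restr E ?Z)\<^sup>*"
      using rtrancl_Restr_mono[OF simple_path_mem_rtrancl(2)[OF S True]] by blast
    moreover have "(y, z) \<in> Restr E ?Z"
      using step(1,4) True by blast
    ultimately show ?thesis
      by (meson converse_rtrancl_into_rtrancl)
  next
    case False
    then have "(y, z) \<in> Restr E (V - set S)"
      using step(1) E_subset \<open>y \<in> V - set S\<close> by blast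
    then have "(v, z) \<in> (Restr E (V - set S))\<^sup>*"
      using step(4) by (meson rtrancl_into_rtrancl)
    moreover have "(y, z) \<in> Restr E ?Z"
      using step(1,4) calculation by blast
    ultimately show ?thesis
      using step(3) by (meson converse_rtrancl_into_rtrancl)
  qed
qed simp

text \<open>From a walk \<open>x0 \<rightarrow> v\<close> avoiding \<open>S\<close>, enter the strong component of \<open>v\<close> in \<open>CS\<close> at \<open>u\<close>
  through ancestors of \<open>v\<close> only, then leave through descendants of \<open>v\<close> and the end of \<open>S\<close>;
  both parts meet only in \<open>u\<close>.\<close>

lemma cs_path_equiv_on_simple_path:
  assumes S: "simple_path E a out S" and x0: "x0 \<in> V - set S"
    and w: "(x0, v) \<in> (Restr E (V - set S))\<^sup>*"
  obtains u P where "cs_path_equiv V E S v u" "simple_path E x0 out P" "u \<in> set P"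
proof -
  define EC where "EC = Restr E (V - set S)"
  define Anc where "Anc = {y. (y, v) \<in> EC\<^sup>*}"
  define Desc where "Desc = {y. (v, y) \<in> EC\<^sup>*}"
  have inC: "y \<in> V - set S" if "(y, z) \<in> EC\<^sup>*" "z \<in> V - set S" for y z
    using that unfolding EC_def by (auto elim: converse_rtranclE)
  have v: "v \<in> V - set S"
    using w x0 unfolding EC_def by (auto elim: rtranclE)
  obtain u where u: "u \<in> Anc \<inter> Desc" "x0 \<in> (Anc - Anc \<inter> Desc) \<union> {u}"
    "(x0, u) \<in> (Restr EC ((Anc - Anc \<inter> Desc) \<union> {u}))\<^sup>*"
    using rtrancl_first_entry[of x0 v EC "Anc \<inter> Desc"] w
    unfolding Anc_def Desc_def EC_def by auto
  have uC: "u \<in> V - set S"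
    using u(1) inC v unfolding Anc_def by blast
  have "(u, out) \<in> (Restr E (Desc \<union> set S))\<^sup>*"
    using reaches_out_via_descendants[OF S v reaches_out] uC u(1) unfolding Desc_def EC_def by blast
  moreover have "u \<in> Desc \<union> set S"
    using u(1) by blast
  ultimately obtain P2 where P2: "simple_path E u out P2" "set P2 \<subseteq> Desc \<union> set S"
    by (rule rtrancl_imp_simple_path)
  have "Restr EC ((Anc - Anc \<inter> Desc) \<union> {u}) \<subseteq> Restr E ((Anc - Anc \<inter> Desc) \<union> {u})"
    unfolding EC_def by blast
  then have "(x0, u) \<in> (Restr E ((Anc - Anc \<inter> Desc) \<union> {u}))\<^sup>*"
    using u(3) rtrancl_mono by blast
  then obtain P1 where P1: "simple_path E x0 u P1" "set P1 \<subseteq> (Anc - Anc \<inter> Desc) \<union> {u}"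
    using u(2) by (rule rtrancl_imp_simple_path)
  have "Anc \<inter> set S = {}"
    using inC v unfolding Anc_def by blast
  then have "set P1 \<inter> set P2 \<subseteq> {u}"
    using P1(2) P2(2) by blast
  then have "simple_path E x0 out (P1 @ tl P2)"
    using simple_path_append[OF P1(1) P2(1)] by blast
  moreover have "u \<in> set (P1 @ tl P2)"
    using simple_path_last_in[OF P1(1)] by simp
  moreover have "cs_path_equiv V E S v u"
    unfolding cs_path_equiv_def Let_def using u(1) uC v unfolding Anc_def Desc_def EC_def by simp
  ultimately show ?thesis
    using that by blast
qed

lemma simple_path_continue_after_rho:
  assumes P: "simple_path E a rho P" "set P \<subseteq> insert rho pre_rho"
  obtains S where "simple_path E a out S" "set S \<inter> insert rho pre_rho \<subseteq> set P"
proof -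
  obtain i0 S0 where S0: "i0 \<in> I" "simple_path E i0 out S0"
    using input_simple_path two_distinct_inputs by metis
  obtain ys zs where sp: "S0 = ys @ rho # zs"
    using rho_in_path[OF S0] by (meson split_list)
  have T: "simple_path E rho out (rho # zs)"
    using simple_path_suffix S0(2) sp by metis
  have "visits_before S0 rho w" if "w \<in> set zs" for w
    using that visits_before_appendI[of ys rho] sp simple_path_distinct[OF S0(2)] by (metis split_list)
  then have zs: "set zs \<inter> insert rho pre_rho = {}"
    using notin_pre_rho_if_after_rho[OF S0] simple_path_distinct[OF S0(2)] sp by auto
  then have "simple_path E a out (P @ zs)"
    using simple_path_append[OF P(1) T] P(2) by fastforce
  moreover have "set (P @ zs) \<inter> insert rho pre_rho \<subseteq> set P"
    using zs by auto
  ultimately show ?thesis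
    using that by blast
qed

lemma W_nodes_if_appendage:
  assumes v: "v \<in> pre_rho" "abs_appendage E I out v" "\<forall>i\<in>I. \<not> i_simple E out i v"
  shows "v \<in> W_nodes V E I out"
proof -
  obtain i0 S0 where S0: "i0 \<in> I" "simple_path E i0 out S0"
    using input_simple_path two_distinct_inputs by metis
  then have "v \<notin> set S0"
    using v(3) unfolding i_simple_def by blast
  then obtain ia ib Z1 Z2 where Z: "ia \<in> I" "ib \<in> I" "Z1 \<subseteq> insert rho pre_rho"
    "Z2 \<subseteq> insert rho pre_rho" "Z1 \<inter> Z2 = {}" "ia \<in> Z1" "ib \<in> Z2"
    "(ia, rho) \<in> (Restr E Z1)\<^sup>*" "(ib, v) \<in> (Restr E Z2)\<^sup>*"
    using disjoint_input_paths[OF v(1) S0] by metis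
  obtain P1 where P1: "simple_path E ia rho P1" "set P1 \<subseteq> Z1"
    using rtrancl_imp_simple_path[OF Z(8,6)] .
  obtain S where S: "simple_path E ia out S" "set S \<inter> insert rho pre_rho \<subseteq> set P1"
    using simple_path_continue_after_rho[OF P1(1)] P1(2) Z(3) by blast
  have Z2: "Z2 \<subseteq> V - set S"
    using S(2) P1(2) Z(4,5) rho_in_V pre_rho_subset_V by blast
  have ibv: "ib \<in> V - set S" "(ib, v) \<in> (Restr E (V - set S))\<^sup>*"
    using Z(7) Z2 rtrancl_Restr_mono[OF Z(9) Z2] by auto
  then obtain u P where u: "cs_path_equiv V E S v u" "simple_path E ib out P" "u \<in> set P"
    using cs_path_equiv_on_simple_path[OF S(1)] by metis
  have "\<not> abs_appendage E I out u"
    unfolding abs_appendage_def i_appendage_def i_simple_def using u(2,3) Z(2) by blast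
  moreover have "u \<in> pre_rho"
  proof -
    have CV: "V - set S \<subseteq> V - {rho}"
      using rho_in_path[OF Z(1) S(1)] by blast
    have "(ib, u) \<in> (Restr E (V - set S))\<^sup>*"
      using ibv(2) u(1) unfolding cs_path_equiv_def Let_def by (meson rtrancl_trans)
    moreover have "ib \<in> pre_rho"
      using input_in_pre_rho Z(2) ibv(1) CV by blast
    ultimately show ?thesis
      using pre_rho_closed rtrancl_Restr_mono[OF _ CV] by blast
  qed
  ultimately show ?thesis
    unfolding W_nodes_def using v(2) pre_rho_subset_V v(1) Z(1) S(1) u(1) not_between_ss_if_pre_rho
    by blast
qed

lemma W_nodes_if_i_simple:
  assumes v: "v \<in> pre_rho" "v \<notin> I" and i: "i \<in> I" "i_simple E out i v"
  shows "v \<in> W_nodes V E I out"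
proof -
  obtain S p where S: "simple_path E i out S" "p < length S" "S ! p = v"
    using i(2) unfolding i_simple_def by (metis in_set_conv_nth)
  have "S ! 0 = i" "0 < length S"
    using S(1) unfolding simple_path_def by (auto simp: hd_conv_nth)
  then have "visits_before S i v"
    using visits_before_nth_iff[OF simple_path_distinct[OF S(1)] _ S(2)] S(3) v(2) i(1)
    by (metis gr0I)
  moreover have "visits_before S v rho"
    using in_pre_rho_on_path_iff[OF i(1) S(1)] v(1) S(2,3) rho_notin_pre_rho by (metis nth_mem)
  ultimately show ?thesis
    unfolding W_nodes_def using v(1) pre_rho_subset_V i(1) S(1) by blast
qed

lemma counterweight_subset_W_nodes: "insert rho pre_rho \<subseteq> W_nodes V E I out"
proof
  fix v assume vY: "v \<in> insert rho pre_rho"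
  then have vV: "v \<in> V"
    using rho_in_V pre_rho_subset_V by blast
  consider "v = rho \<or> v \<in> I" | "v \<in> pre_rho" "v \<notin> I" "\<exists>i\<in>I. i_simple E out i v"
    | "\<forall>i\<in>I. \<not> i_simple E out i v" "\<exists>i\<in>I. \<not> downstream E i v"
    | "v \<in> pre_rho" "\<forall>i\<in>I. \<not> i_simple E out i v" "\<forall>i\<in>I. downstream E i v"
    using vY by blast
  then show "v \<in> W_nodes V E I out"
  proof cases
    case 1
    then show ?thesis
      unfolding W_nodes_def using vV by blast
  next
    case 2
    then show ?thesis
      using W_nodes_if_i_simple by blast
  next
    case 3
    then have "\<not> abs_appendage E I out v" "\<not> abs_simple E I out v"
      unfolding abs_appendage_def i_appendage_def abs_simple_def
      using two_distinct_inputs by (blast, metis)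
    then show ?thesis
      unfolding W_nodes_def using vV by blast
  next
    case 4
    then show ?thesis
      using W_nodes_if_appendage unfolding abs_appendage_def i_appendage_def by blast
  qed
qed

end

theorem theorem3p28:
  fixes V :: "'v set" and E :: "('v \<times> 'v) set" and I :: "'v set" and out :: 'v
  assumes "core_network V E I out"
    and "card I \<ge> 2"
  shows "(\<exists>bs. btf_decomp (hmat V E I out) V V bs) \<and>
         (\<forall>bs k. btf_decomp (hmat V E I out) V V bs \<longrightarrow> k < length bs \<longrightarrow> out \<in> snd (bs ! k) \<longrightarrow>
            perm_equiv (hmat V E I out) (fst (bs ! k)) (snd (bs ! k))
                       (hmat (W_nodes V E I out) E I (rho1 V E I out)) (W_nodes V E I out) (W_nodes V E I out))"
proof -
  interpret multi_input_core_network V E I out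
    using assms by unfold_locales
  have W: "W_nodes V E I out = insert rho pre_rho"
    using W_nodes_subset_counterweight counterweight_subset_W_nodes by blast
  obtain i S where "i \<in> I" "simple_path E i out S"
    using input_simple_path two_distinct_inputs by metis
  then have "\<exists>bs. btf_decomp hm V V bs"
    using btf_decomp_exists[OF finite_V perfect_matching_path] by blast
  moreover have "perm_equiv hm (fst (bs ! k)) (snd (bs ! k)) (hmat (W_nodes V E I out) E I rho)
      (W_nodes V E I out) (W_nodes V E I out)"
    if "btf_decomp hm V V bs" "k < length bs" "out \<in> snd (bs ! k)" for bs k
    using btf_block_of_out[OF that] perm_equiv_hmat_relabel_output[of out rho pre_rho V E I] W
      out_in_V rho_in_V pre_rho_subset_V out_notin_pre_rho rho_notin_pre_rho by simp
  ultimately show ?thesis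
    by blast
qed

end
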